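(* Let $\mathcal{M}_0$ be the set of all probability distributions on $\mathbb{R}$ and let $T:\mathcal{M}_0\to\mathcal{M}_0$ be monotone. (i) $\mathcal{U}\circ T=T\circ\mathcal{U}$ if and only if $T=T_d\circ T^u$ for some $d\in\widehat{\mathcal{F}_D}$ and some strictly increasing surjective $u:\mathbb{R}\to\mathbb{R}$. (ii) $\mathcal{D}'\circ T=T\circ\mathcal{D}'$ if and only if $T=T_d\circ T^u$ for some increasing left-continuous $u:\mathbb{R}\to\mathbb{R}$ and some strictly increasing continuous $d\in\widehat{\mathcal{F}_D}$.
   Context: Increasing means non-decreasing. $\widehat{\mathcal{F}_D}$ is the set of increasing $d:[0,1]\to[0,1]$ with $d(0)=\lim_{x\downarrow0}d(x)=0$ and $d(1)=\lim_{x\uparrow1}d(x)=1$; $T_d(F)(x)=\lim_{y\downarrow x}d(F(y))$. For increasing $u$, $T^u(F)$ is the distribution of $u(X)$ when $X\sim F$. $\mathcal{U}=\{T^u: u:\mathbb{R}\to\mathbb{R}\text{ increasing and continuous}\}$ and $\mathcal{D}'=\{T_d: d\in\widehat{\mathcal{F}_D}\text{ right-continuous}\}$. For a set $\mathcal{T}$ of maps, $\mathcal{T}\circ T=\{T'\circ T:T'\in\mathcal{T}\}$, $T\circ\mathcal{T}=\{T\circ T':T'\in\mathcal{T}\}$. $F\le_{\rm st}G$ means $F(x)\ge G(x)$ for all $x$; $T$ is monotone if $F\le_{\rm st}G$ implies $T(F)\le_{\rm st}T(G)$. *)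

theory Defs
  imports "HOL-Analysis.Analysis"
begin

text \<open>Probability distributions on the reals are represented by their distribution
  functions (CDFs).\<close>
definition M0 :: "(real \<Rightarrow> real) set" where
  "M0 = {F. mono F \<and> (\<forall>x. continuous (at_right x) F)
          \<and> (F \<longlongrightarrow> 0) at_bot \<and> (F \<longlongrightarrow> 1) at_top}"

definition st_le :: "(real \<Rightarrow> real) \<Rightarrow> (real \<Rightarrow> real) \<Rightarrow> bool" where
  "st_le F G \<longleftrightarrow> (\<forall>x. F x \<ge> G x)"

definition monotone_map :: "((real \<Rightarrow> real) \<Rightarrow> (real \<Rightarrow> real)) \<Rightarrow> bool" where
  "monotone_map T \<longleftrightarrow> (\<forall>F\<in>M0. \<forall>G\<in>M0. st_le F G \<longrightarrow> st_le (T F) (T G))"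

text \<open>The class of distortion functions on [0,1] (only values on [0,1] matter).\<close>
definition hatFD :: "(real \<Rightarrow> real) set" where
  "hatFD = {d. mono_on {0..1} d \<and> d ` {0..1} \<subseteq> {0..1}
              \<and> d 0 = 0 \<and> (d \<longlongrightarrow> 0) (at_right 0)
              \<and> d 1 = 1 \<and> (d \<longlongrightarrow> 1) (at_left 1)}"

definition TD :: "(real \<Rightarrow> real) \<Rightarrow> (real \<Rightarrow> real) \<Rightarrow> (real \<Rightarrow> real)" where
  "TD d F = (\<lambda>x. Lim (at_right x) (\<lambda>y. d (F y)))"

text \<open>T^u(F): the distribution function of u(X) where X has distribution function F;
  the law of X is the measure interval_measure F.\<close>
definition TU :: "(real \<Rightarrow> real) \<Rightarrow> (real \<Rightarrow> real) \<Rightarrow> (real \<Rightarrow> real)" where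
  "TU u F = (\<lambda>y. measure (distr (interval_measure F) borel u) {..y})"

definition Ucal :: "((real \<Rightarrow> real) \<Rightarrow> (real \<Rightarrow> real)) set" where
  "Ucal = {TU u | u. mono u \<and> continuous_on UNIV u}"

definition Dcal' :: "((real \<Rightarrow> real) \<Rightarrow> (real \<Rightarrow> real)) set" where
  "Dcal' = {TD d | d. d \<in> hatFD \<and> (\<forall>x\<in>{0..<1}. (d \<longlongrightarrow> d x) (at_right x))}"

text \<open>Compositions of maps M0 \<rightarrow> M0, identified as maps on M0 (restricted to M0).\<close>
definition comp_left :: "((real \<Rightarrow> real) \<Rightarrow> (real \<Rightarrow> real)) set \<Rightarrow> ((real \<Rightarrow> real) \<Rightarrow> (real \<Rightarrow> real))
    \<Rightarrow> ((real \<Rightarrow> real) \<Rightarrow> (real \<Rightarrow> real)) set" where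
  "comp_left \<T> T = {restrict (\<lambda>F. T' (T F)) M0 | T'. T' \<in> \<T>}"

definition comp_right :: "((real \<Rightarrow> real) \<Rightarrow> (real \<Rightarrow> real)) \<Rightarrow> ((real \<Rightarrow> real) \<Rightarrow> (real \<Rightarrow> real)) set
    \<Rightarrow> ((real \<Rightarrow> real) \<Rightarrow> (real \<Rightarrow> real)) set" where
  "comp_right T \<T> = {restrict (\<lambda>F. T (T' F)) M0 | T'. T' \<in> \<T>}"

end

(*
  If T = T_d \<circ> T^u, conjugation carries the family on one side onto the family on the other:
  T^v commutes with T_d for continuous increasing v (the right limit defining T_d is transported
  by the generalized inverse of v), T^u commutes with T_d for left-continuous u and
  right-continuous d, and T^v \<circ> T^u = T^u \<circ> T^(u^-1 \<circ> v \<circ> u), T_d' \<circ> T_d = T_d \<circ> T_(d^-1 \<circ> d' \<circ> d).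

  Conversely, commuting with the constant maps (in (i)) or with the step distortion at 1/2
  (in (ii)) forces T to send point masses to point masses, T \<delta>_x = \<delta>_(u x), with u increasing
  since T is monotone. In (i), affine maps show that u is a strictly increasing bijection, so
  S = T \<circ> T^(u^-1) commutes with all of \<U> and fixes point masses. Affine maps and clamping then
  squeeze S G at x between d (G x) and d (G y) for x < y, where d p is the value at 0 of S
  applied to the law p \<delta>_0 + (1 - p) \<delta>_1; hence S = T_d. In (ii), either u is constant and then
  so is T, or T applied to the two-point laws on x0 < x1 with u x0 < u x1 defines an increasing
  homeomorphism d of [0,1]. T conjugates the step distortion at p to the step distortion at d p,
  which forces T F = d \<circ> T^u F and, tested on uniform laws, the left continuity of u.
*)

theory Submission
  imports Defs "HOL-Probability.Probability"
begin

section \<open>Distribution functions\<close>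

lemma M0D:
  assumes "F \<in> M0"
  shows "mono F" "\<And>x. continuous (at_right x) F" "(F \<longlongrightarrow> 0) at_bot" "(F \<longlongrightarrow> 1) at_top"
  using assms by (auto simp: M0_def)

lemma M0_nonneg: assumes "F \<in> M0" shows "0 \<le> F x"
proof -
  have "(F \<longlongrightarrow> 0) at_bot" "mono F" using M0D[OF assms] by auto
  then show ?thesis
    by (intro tendsto_upperbound[of F 0 at_bot])
      (auto simp: eventually_at_bot_linorder mono_def intro!: exI[of _ x])
qed

lemma M0_le_1: assumes "F \<in> M0" shows "F x \<le> 1"
proof -
  have "(F \<longlongrightarrow> 1) at_top" "mono F" using M0D[OF assms] by auto
  then show ?thesis
    by (intro tendsto_lowerbound[of F 1 at_top])
      (auto simp: eventually_at_top_linorder mono_def intro!: exI[of _ x])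
qed

lemma M0_tendsto_at_right: "F \<in> M0 \<Longrightarrow> (F \<longlongrightarrow> F x) (at_right x)"
  using M0D(2) by (simp add: continuous_within)

lemma real_distribution_M0: "F \<in> M0 \<Longrightarrow> real_distribution (interval_measure F)"
  using M0D by (intro real_distribution_interval_measure) (auto simp: mono_def)

lemma measure_atMost_M0: "F \<in> M0 \<Longrightarrow> measure (interval_measure F) {..x} = F x"
  using M0D by (intro measure_interval_measure_Iic) (auto simp: mono_def)

lemma cdf_interval_measure_M0: "F \<in> M0 \<Longrightarrow> cdf (interval_measure F) = F"
  using measure_atMost_M0 by (auto simp: cdf_def)

lemma cdf_in_M0: assumes "real_distribution M" shows "cdf M \<in> M0"
proof -
  interpret real_distribution M by fact
  show ?thesis
    using cdf_nondecreasing cdf_is_right_cont cdf_lim_at_bot cdf_lim_at_top_prob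
    by (auto simp: M0_def mono_def)
qed

definition delta :: "real \<Rightarrow> real \<Rightarrow> real" where
  "delta x = (\<lambda>y. if x \<le> y then 1 else 0)"

lemma real_distribution_return: "real_distribution (return borel x)"
  by (auto simp: real_distribution_def real_distribution_axioms_def intro: prob_space_return)

lemma cdf_return: "cdf (return borel x) = delta x"
  by (auto simp: cdf_def delta_def measure_return indicator_def)

lemma delta_in_M0: "delta x \<in> M0"
  using cdf_in_M0[OF real_distribution_return] by (simp add: cdf_return)

lemma interval_measure_delta: "interval_measure (delta x) = return borel x"
  by (rule cdf_unique)
    (simp_all add: real_distribution_M0 delta_in_M0 real_distribution_return cdf_return
      cdf_interval_measure_M0)

lemma delta_eq_iff [simp]: "delta x = delta y \<longleftrightarrow> x = y"
  unfolding delta_def by (metis order.refl one_neq_zero order.antisym)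

lemma st_le_delta_iff: "st_le (delta x) (delta y) \<longleftrightarrow> x \<le> y"
  by (auto simp: st_le_def delta_def dest: spec[of _ y] split: if_splits)

lemma M0_two_valued_eq_delta:
  assumes P: "P \<in> M0" and P01: "\<And>x. P x = 0 \<or> P x = 1"
  obtains q where "P = delta q"
proof -
  let ?S = "{x. P x = 1}"
  have "eventually (\<lambda>x. P x > 1/2) at_top" using M0D(4)[OF P] by (intro order_tendstoD) auto
  then obtain x1 where "P x1 > 1/2" by (auto simp: eventually_at_top_linorder)
  then have ne: "?S \<noteq> {}" using P01[of x1] by auto
  have "eventually (\<lambda>x. P x < 1/2) at_bot" using M0D(3)[OF P] by (intro order_tendstoD) auto
  then obtain x0 where x0: "\<And>x. x \<le> x0 \<Longrightarrow> P x < 1/2" by (auto simp: eventually_at_bot_linorder)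
  have "x0 \<le> x" if "x \<in> ?S" for x using x0[of x] that by force
  then have bdd: "bdd_below ?S" by (rule bdd_belowI)
  define q where "q = Inf ?S"
  have gt: "P y = 1" if "y > q" for y
  proof -
    have "\<exists>s\<in>?S. s < y" using cInf_less_iff[OF ne bdd, of y] that unfolding q_def by blast
    then obtain s where "s \<in> ?S" "s < y" by blast
    then show ?thesis using monoD[OF M0D(1)[OF P], of s y] M0_le_1[OF P, of y] by simp
  qed
  have "(P \<longlongrightarrow> 1) (at_right q)"
    by (rule tendsto_eventually) (auto simp: eventually_at_right_field gt intro!: exI[of _ "q+1"])
  then have Pq: "P q = 1" using tendsto_unique[OF _ M0_tendsto_at_right[OF P, of q]] by force
  have "P x = delta q x" for x
  proof (cases "q \<le> x")
    case True
    then show ?thesis using monoD[OF M0D(1)[OF P] True] Pq M0_le_1[OF P, of x] by (simp add: delta_def)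
  next
    case False
    then have "x \<notin> ?S" using cInf_lower[OF _ bdd] by (force simp: q_def)
    then show ?thesis using False P01[of x] by (simp add: delta_def)
  qed
  then show ?thesis using that by blast
qed

section \<open>The maps \<open>T\<^sup>u\<close>\<close>

lemma TU_eq_cdf: "TU v F = cdf (distr (interval_measure F) borel v)"
  by (simp add: TU_def cdf_def)

lemma real_distribution_distr_M0:
  assumes "F \<in> M0" "v \<in> borel_measurable borel"
  shows "real_distribution (distr (interval_measure F) borel v)"
proof -
  interpret real_distribution "interval_measure F" using real_distribution_M0[OF assms(1)] .
  show ?thesis using assms(2) by (intro real_distribution_distr) (simp add: measurable_def)
qed

lemma TU_in_M0: "F \<in> M0 \<Longrightarrow> v \<in> borel_measurable borel \<Longrightarrow> TU v F \<in> M0"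
  unfolding TU_eq_cdf by (rule cdf_in_M0[OF real_distribution_distr_M0])

lemma TU_eq_measure:
  assumes "F \<in> M0" "v \<in> borel_measurable borel"
  shows "TU v F y = measure (interval_measure F) {x. v x \<le> y}"
proof -
  have "v \<in> measurable (interval_measure F) borel" using assms(2) by (simp add: measurable_def)
  then have "TU v F y = measure (interval_measure F) (v -` {..y} \<inter> space (interval_measure F))"
    unfolding TU_def by (rule measure_distr) simp
  also have "v -` {..y} \<inter> space (interval_measure F) = {x. v x \<le> y}" by auto
  finally show ?thesis .
qed

lemma interval_measure_TU:
  assumes "F \<in> M0" "v \<in> borel_measurable borel"
  shows "interval_measure (TU v F) = distr (interval_measure F) borel v"
  by (rule cdf_unique)
    (simp_all add: real_distribution_M0 TU_in_M0 real_distribution_distr_M0 assms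
      cdf_interval_measure_M0 TU_eq_cdf[symmetric])

lemma TU_TU:
  assumes "F \<in> M0" "v \<in> borel_measurable borel" "w \<in> borel_measurable borel"
  shows "TU w (TU v F) = TU (w \<circ> v) F"
proof -
  have "v \<in> measurable (interval_measure F) borel" using assms(2) by (simp add: measurable_def)
  then have distr: "distr (distr (interval_measure F) borel v) borel w = distr (interval_measure F) borel (w \<circ> v)"
    by (rule distr_distr[OF assms(3)])
  have "TU w (TU v F) = (\<lambda>y. measure (distr (interval_measure (TU v F)) borel w) {..y})"
    by (rule TU_def)
  also have "\<dots> = TU (w \<circ> v) F"
    by (subst interval_measure_TU[OF assms(1,2)]) (simp add: distr TU_def)
  finally show ?thesis .
qed

lemma TU_ident: "F \<in> M0 \<Longrightarrow> TU (\<lambda>x. x) F = F"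
  by (rule ext) (simp add: TU_eq_measure atMost_def[symmetric] measure_atMost_M0)

lemma TU_delta: assumes "w \<in> borel_measurable borel" shows "TU w (delta x) = delta (w x)"
proof
  fix y
  have "{z. w z \<le> y} \<in> sets borel" using assms by measurable
  moreover have "TU w (delta x) y = measure (return borel x) {z. w z \<le> y}"
    using TU_eq_measure[OF delta_in_M0 assms, of x y] by (simp add: interval_measure_delta)
  ultimately show "TU w (delta x) y = delta (w x) y"
    by (simp add: measure_return delta_def indicator_def)
qed

lemma TU_const: assumes "H \<in> M0" shows "TU (\<lambda>_. c) H = delta c"
proof
  fix y
  interpret real_distribution "interval_measure H" by (rule real_distribution_M0[OF assms])
  show "TU (\<lambda>_. c) H y = delta c y"
    using TU_eq_measure[OF assms, of "\<lambda>_. c" y] prob_space by (simp add: delta_def)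
qed

lemma TU_eq_of_adjoint:
  assumes "H \<in> M0" "w \<in> borel_measurable borel" "\<And>z. w z \<le> y \<longleftrightarrow> z \<le> w' y"
  shows "TU w H y = H (w' y)"
  using TU_eq_measure[OF assms(1,2), of y] measure_atMost_M0[OF assms(1)] assms(3)
  by (simp add: atMost_def)

lemma TU_affine:
  assumes "H \<in> M0" "h > 0"
  shows "TU (\<lambda>z. x + h * z) H = (\<lambda>y. H ((y - x) / h))"
proof
  fix y
  have "(\<lambda>z. x + h * z) \<in> borel_measurable borel" by measurable
  then show "TU (\<lambda>z. x + h * z) H y = H ((y - x) / h)"
    by (rule TU_eq_of_adjoint[OF assms(1)]) (use assms(2) in \<open>simp add: field_simps\<close>)
qed

definition upper_inverse :: "(real \<Rightarrow> real) \<Rightarrow> real \<Rightarrow> real" where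
  "upper_inverse v y = Sup {z. v z \<le> y}"

lemma sublevel_eq_atMost_upper_inverse:
  fixes v :: "real \<Rightarrow> real"
  assumes v: "mono v" "\<And>x. continuous (at_left x) v"
    and ne: "{z. v z \<le> y} \<noteq> {}" and nu: "{z. v z \<le> y} \<noteq> UNIV"
  shows "{z. v z \<le> y} = {..upper_inverse v y}"
proof -
  let ?S = "{z. v z \<le> y}" and ?a = "upper_inverse v y"
  from nu obtain z0 where "\<not> v z0 \<le> y" by auto
  then have lt: "s < z0" if "v s \<le> y" for s
    using that monoD[OF v(1), of z0 s] by (cases "s < z0") auto
  have bdd: "bdd_above ?S"
  proof (rule bdd_aboveI)
    fix s assume "s \<in> ?S" then show "s \<le> z0" using less_imp_le[OF lt, of s] by simp
  qed
  have down: "v z \<le> y" if "z \<le> s" "v s \<le> y" for z s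
    using monoD[OF v(1) that(1)] that(2) by simp
  have "v z \<le> y" if "z < ?a" for z
  proof -
    have "\<exists>s\<in>?S. z < s" using less_cSup_iff[OF ne bdd] that unfolding upper_inverse_def by blast
    then show ?thesis using down by (auto intro: less_imp_le)
  qed
  then have "eventually (\<lambda>z. v z \<le> y) (at_left ?a)"
    by (auto simp: eventually_at_left_field intro!: exI[of _ "?a - 1"])
  then have va: "v ?a \<le> y"
    using v(2)[of ?a] by (intro tendsto_upperbound[of v "v ?a" "at_left ?a"]) (auto simp: continuous_within)
  show ?thesis
  proof (intro equalityI subsetI)
    fix z assume "z \<in> ?S" then show "z \<in> {..?a}"
      using cSup_upper[OF _ bdd] by (simp add: upper_inverse_def)
  next
    fix z assume "z \<in> {..?a}" then show "z \<in> ?S" using down[OF _ va] by simp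
  qed
qed

lemma TU_mono_left_cont:
  fixes v :: "real \<Rightarrow> real"
  assumes F: "F \<in> M0" and v: "mono v" "\<And>x. continuous (at_left x) v"
  shows "TU v F y = (if {z. v z \<le> y} = {} then 0 else if {z. v z \<le> y} = UNIV then 1
                     else F (upper_inverse v y))"
proof -
  interpret real_distribution "interval_measure F" by (rule real_distribution_M0[OF F])
  have "TU v F y = prob {z. v z \<le> y}" by (rule TU_eq_measure[OF F borel_measurable_mono[OF v(1)]])
  moreover have "prob {z. v z \<le> y} = F (upper_inverse v y)"
    if "{z. v z \<le> y} \<noteq> {}" "{z. v z \<le> y} \<noteq> UNIV"
    using sublevel_eq_atMost_upper_inverse[OF v that] measure_atMost_M0[OF F] by simp
  ultimately show ?thesis using prob_space by auto
qed

lemma eventually_sublevel_ne_UNIV: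
  fixes v :: "real \<Rightarrow> real"
  assumes "{z. v z \<le> y} \<noteq> UNIV"
  shows "eventually (\<lambda>y'. {z. v z \<le> y'} \<noteq> UNIV) (at_right y)"
proof -
  from assms obtain z0 where "\<not> v z0 \<le> y" by auto
  then have "eventually (\<lambda>y'. y' < v z0) (at_right y)"
    by (auto simp: eventually_at_right_field intro!: exI[of _ "v z0"])
  then show ?thesis
  proof eventually_elim
    case (elim y')
    then have "z0 \<notin> {z. v z \<le> y'}" by simp
    then show ?case by blast
  qed
qed

lemma filterlim_upper_inverse_at_right:
  fixes v :: "real \<Rightarrow> real"
  assumes v: "mono v" "continuous_on UNIV v"
    and ne: "{z. v z \<le> y} \<noteq> {}" and nu: "{z. v z \<le> y} \<noteq> UNIV"
  shows "filterlim (upper_inverse v) (at_right (upper_inverse v y)) (at_right y)"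
proof -
  let ?a = "upper_inverse v y"
  have cont: "continuous (at x) v" for x
    using v(2) by (simp add: continuous_on_eq_continuous_within)
  have A: "{z. v z \<le> y} = {..?a}"
    using cont by (intro sublevel_eq_atMost_upper_inverse[OF v(1) _ ne nu]) (simp add: continuous_at_split)
  have below: "z \<le> t" if "v z \<le> y'" "y' < v t" for z y' t
    using monoD[OF v(1), of t z] that by force
  have "v ?a \<le> y" using A by auto
  have le: "upper_inverse v y' \<le> t" if "y' < v t" "y < y'" for y' t
  proof -
    have "?a \<in> {z. v z \<le> y'}" using \<open>v ?a \<le> y\<close> that(2) by simp
    then show ?thesis
      unfolding upper_inverse_def using below[OF _ that(1)] by (intro cSup_least) auto
  qed
  have ev_gt: "eventually (\<lambda>y'. ?a < upper_inverse v y') (at_right y)"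
    using eventually_sublevel_ne_UNIV[OF nu] eventually_at_right_less[of y]
  proof eventually_elim
    case (elim y')
    have "v ?a < y'" using \<open>v ?a \<le> y\<close> elim(2) by simp
    then have "eventually (\<lambda>z. v z < y') (at_right ?a)"
      using cont[of ?a] by (intro order_tendstoD) (simp_all add: isCont_def filterlim_at_split)
    then obtain b where "?a < b" and b: "\<And>z. ?a < z \<Longrightarrow> z < b \<Longrightarrow> v z < y'"
      by (auto simp: eventually_at_right_field)
    define z where "z = (?a + b) / 2"
    have z: "?a < z" "v z \<le> y'" using b[of z] \<open>?a < b\<close> by (auto simp: z_def)
    from elim(1) obtain t where "\<not> v t \<le> y'" by auto
    then have "y' < v t" by simp
    then have "z \<le> upper_inverse v y'"
      unfolding upper_inverse_def using z below by (intro cSup_upper) (auto intro: bdd_aboveI[of _ t])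
    then show ?case using z by simp
  qed
  have "(upper_inverse v \<longlongrightarrow> ?a) (at_right y)"
  proof (rule order_tendstoI)
    fix c assume "c < ?a"
    show "eventually (\<lambda>y'. c < upper_inverse v y') (at_right y)"
      using ev_gt by eventually_elim (use \<open>c < ?a\<close> in simp)
  next
    fix c assume "?a < c"
    then have "(?a + c) / 2 \<notin> {z. v z \<le> y}" using A by auto
    then have "eventually (\<lambda>y'. y < y' \<and> y' < v ((?a + c) / 2)) (at_right y)"
      by (auto simp: eventually_at_right_field intro!: exI[of _ "v ((?a + c) / 2)"])
    then show "eventually (\<lambda>y'. upper_inverse v y' < c) (at_right y)"
      by eventually_elim (use le \<open>?a < c\<close> in fastforce)
  qed
  then show ?thesis using ev_gt by (rule tendsto_imp_filterlim_at_right)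
qed

section \<open>The maps \<open>T\<^sub>d\<close>\<close>

definition right_cont_01 :: "(real \<Rightarrow> real) \<Rightarrow> bool" where
  "right_cont_01 d \<longleftrightarrow> (\<forall>x\<in>{0..<1}. (d \<longlongrightarrow> d x) (at_right x))"

lemma Dcal'_iff: "T' \<in> Dcal' \<longleftrightarrow> (\<exists>d. T' = TD d \<and> d \<in> hatFD \<and> right_cont_01 d)"
  by (auto simp: Dcal'_def right_cont_01_def)

lemma hatFD_D:
  assumes "d \<in> hatFD"
  shows "mono_on {0..1} d" "\<And>x. x \<in> {0..1} \<Longrightarrow> d x \<in> {0..1}" "d 0 = 0" "d 1 = 1"
    "(d \<longlongrightarrow> 0) (at_right 0)" "(d \<longlongrightarrow> 1) (at_left 1)"
  using assms unfolding hatFD_def by (auto simp: image_subset_iff)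

lemma right_cont_01_if_continuous_on:
  assumes "continuous_on {0..1} d" shows "right_cont_01 d"
  unfolding right_cont_01_def
proof
  fix x :: real assume x: "x \<in> {0..<1}"
  have "continuous_on {x..1} d" using assms by (rule continuous_on_subset) (use x in auto)
  then show "(d \<longlongrightarrow> d x) (at_right x)" by (rule continuous_on_Icc_at_rightD) (use x in auto)
qed

lemma tendsto_compose_right_cont:
  fixes e f :: "real \<Rightarrow> real"
  assumes "(e \<longlongrightarrow> e a) (at_right a)" "(f \<longlongrightarrow> a) F" "eventually (\<lambda>y. a \<le> f y) F"
  shows "((\<lambda>y. e (f y)) \<longlongrightarrow> e a) F"
  by (rule continuous_within_tendsto_compose[where S = "{a..}"])
    (use assms in \<open>auto simp: continuous_within at_within_Ici_at_right\<close>)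

lemma tendsto_compose_left_cont:
  fixes e f :: "real \<Rightarrow> real"
  assumes "(e \<longlongrightarrow> e a) (at_left a)" "(f \<longlongrightarrow> a) F" "eventually (\<lambda>y. f y \<le> a) F"
  shows "((\<lambda>y. e (f y)) \<longlongrightarrow> e a) F"
  by (rule continuous_within_tendsto_compose[where S = "{..a}"])
    (use assms in \<open>auto simp: continuous_within at_within_Iic_at_left\<close>)

lemma hatFD_comp_M0:
  assumes G: "G \<in> M0" and d: "d \<in> hatFD"
  shows "mono (\<lambda>s. d (G s))" "0 \<le> d (G s)" "d (G s) \<le> 1"
proof -
  show "mono (\<lambda>s. d (G s))"
    using monoD[OF M0D(1)[OF G]] mono_onD[OF hatFD_D(1)[OF d]] M0_nonneg[OF G] M0_le_1[OF G]
    by (intro monoI) auto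
  show "0 \<le> d (G s)" "d (G s) \<le> 1" using hatFD_D(2)[OF d, of "G s"] M0_nonneg[OF G] M0_le_1[OF G] by auto
qed

lemma tendsto_TD:
  assumes G: "G \<in> M0" and d: "d \<in> hatFD"
  shows "((\<lambda>y. d (G y)) \<longlongrightarrow> TD d G x) (at_right x)"
proof -
  have "((\<lambda>y. d (G y)) \<longlongrightarrow> Inf ((\<lambda>y. d (G y)) ` {x<..})) (at_right x)"
    using Lim_right_bound[of UNIV x "\<lambda>y. d (G y)" 0] monoD[OF hatFD_comp_M0(1)[OF G d]] hatFD_comp_M0(2)[OF G d]
    by simp
  moreover from this have "TD d G x = Inf ((\<lambda>y. d (G y)) ` {x<..})"
    unfolding TD_def by (intro tendsto_Lim) auto
  ultimately show ?thesis by simp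
qed

lemma TD_eq_comp:
  assumes F: "F \<in> M0" and d: "d \<in> hatFD" "right_cont_01 d"
  shows "TD d F = (\<lambda>x. d (F x))"
proof
  fix x
  have "((\<lambda>y. d (F y)) \<longlongrightarrow> d (F x)) (at_right x)"
  proof (cases "F x = 1")
    case True
    have "eventually (\<lambda>y. F y = 1) (at_right x)"
      using eventually_at_right_less[of x]
    proof eventually_elim
      case (elim y)
      then have "F x \<le> F y" using monoD[OF M0D(1)[OF F]] by simp
      then show ?case using True M0_le_1[OF F, of y] by simp
    qed
    then have "eventually (\<lambda>y. d (F y) = d (F x)) (at_right x)" using True by (auto elim: eventually_mono)
    then show ?thesis by (rule tendsto_eventually)
  next
    case False
    then have "F x \<in> {0..<1}" using M0_nonneg[OF F] M0_le_1[OF F] by (auto simp: less_le)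
    moreover have "eventually (\<lambda>y. F x \<le> F y) (at_right x)"
      using eventually_at_right_less[of x] by eventually_elim (simp add: monoD[OF M0D(1)[OF F]])
    ultimately show ?thesis
      using d(2) M0_tendsto_at_right[OF F]
      by (intro tendsto_compose_right_cont[of d "F x" F]) (auto simp: right_cont_01_def)
  qed
  then show "TD d F x = d (F x)" unfolding TD_def by (intro tendsto_Lim) simp_all
qed

lemma TD_in_M0:
  assumes F: "F \<in> M0" and d: "d \<in> hatFD" "right_cont_01 d"
  shows "TD d F \<in> M0"
proof -
  have "((\<lambda>x. d (F x)) \<longlongrightarrow> d 0) at_bot"
    using hatFD_D(3,5)[OF d(1)] M0D(3)[OF F] M0_nonneg[OF F] by (intro tendsto_compose_right_cont[of d 0 F]) auto
  moreover have "((\<lambda>x. d (F x)) \<longlongrightarrow> d 1) at_top"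
    using hatFD_D(4,6)[OF d(1)] M0D(4)[OF F] M0_le_1[OF F] by (intro tendsto_compose_left_cont[of d 1 F]) auto
  moreover have "continuous (at_right x) (\<lambda>x. d (F x))" for x
    using tendsto_TD[OF F d(1), of x] TD_eq_comp[OF F d] by (simp add: continuous_within)
  ultimately show ?thesis
    using hatFD_comp_M0(1)[OF F d(1)] hatFD_D(3,4)[OF d(1)] by (simp add: TD_eq_comp[OF F d] M0_def)
qed

lemma TD_two_valued:
  assumes P: "P \<in> M0" and P01: "\<And>x. P x = 0 \<or> P x = 1" and d: "d \<in> hatFD"
  shows "TD d P = P"
proof
  fix x
  have "(\<lambda>y. d (P y)) = P"
  proof
    fix y show "d (P y) = P y" using P01[of y] hatFD_D(3,4)[OF d] by auto
  qed
  then show "TD d P x = P x" unfolding TD_def using tendsto_Lim[OF _ M0_tendsto_at_right[OF P]] by simp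
qed

lemma TD_delta: "d \<in> hatFD \<Longrightarrow> TD d (delta x) = delta x"
  by (rule TD_two_valued[OF delta_in_M0]) (auto simp: delta_def)

lemma hatFD_comp:
  assumes d1: "d1 \<in> hatFD" and d2: "d2 \<in> hatFD"
  shows "(\<lambda>x. d1 (d2 x)) \<in> hatFD"
proof -
  note D1 = hatFD_D[OF d1] and D2 = hatFD_D[OF d2]
  have "((\<lambda>x. d1 (d2 x)) \<longlongrightarrow> d1 0) (at_right 0)"
    using D1(3,5) D2(5) D2(2) by (intro tendsto_compose_right_cont[of d1 0 d2])
      (auto simp: eventually_at_right_field intro!: exI[of _ 1])
  moreover have "((\<lambda>x. d1 (d2 x)) \<longlongrightarrow> d1 1) (at_left 1)"
    using D1(4,6) D2(6) D2(2) by (intro tendsto_compose_left_cont[of d1 1 d2])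
      (auto simp: eventually_at_left_field intro!: exI[of _ 0])
  moreover have "mono_on {0..1} (\<lambda>x. d1 (d2 x))"
  proof (rule mono_onI)
    fix x y :: real assume "x \<in> {0..1}" "y \<in> {0..1}" "x \<le> y"
    then show "d1 (d2 x) \<le> d1 (d2 y)"
      using D2(2) by (intro mono_onD[OF D1(1)] mono_onD[OF D2(1)]) auto
  qed
  moreover have "(\<lambda>x. d1 (d2 x)) ` {0..1} \<subseteq> {0..1}" using D1(2) D2(2) by auto
  ultimately show ?thesis using D1(3,4) D2(3,4) by (simp add: hatFD_def)
qed

lemma right_cont_01_comp:
  assumes d1: "d1 \<in> hatFD" "right_cont_01 d1" and d2: "d2 \<in> hatFD" "right_cont_01 d2"
  shows "right_cont_01 (\<lambda>x. d1 (d2 x))"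
  unfolding right_cont_01_def
proof
  fix x :: real assume x: "x \<in> {0..<1}"
  have "eventually (\<lambda>y. y < 1) (at_right x)"
    using x by (auto simp: eventually_at_right_field intro!: exI[of _ 1])
  then have up: "eventually (\<lambda>y. d2 x \<le> d2 y \<and> d2 y \<le> 1) (at_right x)"
    using eventually_at_right_less[of x]
  proof eventually_elim
    case (elim y)
    then show ?case
      using x hatFD_D(2)[OF d2(1), of y] mono_onD[OF hatFD_D(1)[OF d2(1)], of x y] by auto
  qed
  show "((\<lambda>y. d1 (d2 y)) \<longlongrightarrow> d1 (d2 x)) (at_right x)"
  proof (cases "d2 x = 1")
    case True
    have "eventually (\<lambda>y. d1 (d2 y) = d1 (d2 x)) (at_right x)"
      using up
    proof eventually_elim
      case (elim y)
      then have "d2 y = 1" using True by linarith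
      then show ?case using True by simp
    qed
    then show ?thesis by (rule tendsto_eventually)
  next
    case False
    then have "d2 x \<in> {0..<1}" using hatFD_D(2)[OF d2(1), of x] x by auto
    then show ?thesis
      using d1(2) d2(2) x up by (intro tendsto_compose_right_cont[of d1 "d2 x" d2]) (auto simp: right_cont_01_def elim: eventually_mono)
  qed
qed

lemma TU_TD_commute_right_cont:
  fixes u :: "real \<Rightarrow> real"
  assumes F: "F \<in> M0" and d: "d \<in> hatFD" "right_cont_01 d"
    and u: "mono u" "\<And>x. continuous (at_left x) u"
  shows "TU u (TD d F) = TD d (TU u F)"
proof
  fix y
  have "TD d (TU u F) y = d (TU u F y)"
    using TD_eq_comp[OF TU_in_M0[OF F borel_measurable_mono[OF u(1)]] d] by simp
  then show "TU u (TD d F) y = TD d (TU u F) y"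
    unfolding TU_mono_left_cont[OF TD_in_M0[OF F d] u, of y] TU_mono_left_cont[OF F u, of y]
    using hatFD_D(3,4)[OF d(1)] TD_eq_comp[OF F d] by simp
qed

text \<open>For arbitrary \<open>d\<close> the right limit in \<open>T\<^sub>d\<close> has to be passed through \<open>upper_inverse v\<close>,
  which needs \<open>v\<close> continuous.\<close>

lemma tendsto_TD_TU_upper_inverse:
  fixes v :: "real \<Rightarrow> real"
  assumes G: "G \<in> M0" and d: "d \<in> hatFD" and v: "mono v" "continuous_on UNIV v"
    and ne: "{z. v z \<le> y} \<noteq> {}" and nu: "{z. v z \<le> y} \<noteq> UNIV"
  shows "((\<lambda>y'. d (TU v G y')) \<longlongrightarrow> TD d G (upper_inverse v y)) (at_right y)"
proof -
  have lc: "\<And>x. continuous (at_left x) v"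
    using v(2) by (simp add: continuous_on_eq_continuous_within continuous_at_split)
  have "eventually (\<lambda>y'. d (G (upper_inverse v y')) = d (TU v G y')) (at_right y)"
    using eventually_sublevel_ne_UNIV[OF nu] eventually_at_right_less[of y]
  proof eventually_elim
    case (elim y')
    obtain z where "v z \<le> y" using ne by auto
    then have "{z. v z \<le> y'} \<noteq> {}" using elim(2) by (auto intro!: exI[of _ z])
    then show ?case using elim(1) TU_mono_left_cont[OF G v(1) lc, of y'] by auto
  qed
  moreover have "((\<lambda>y'. d (G (upper_inverse v y'))) \<longlongrightarrow> TD d G (upper_inverse v y)) (at_right y)"
    by (rule filterlim_compose[OF tendsto_TD[OF G d] filterlim_upper_inverse_at_right[OF v ne nu]])
  ultimately show ?thesis by (rule Lim_transform_eventually[rotated])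
qed

lemma TU_TD_commute:
  fixes v :: "real \<Rightarrow> real"
  assumes G: "G \<in> M0" and d: "d \<in> hatFD" and H: "TD d G \<in> M0"
    and v: "mono v" "continuous_on UNIV v"
  shows "TU v (TD d G) = TD d (TU v G)"
proof
  fix y
  have lc: "\<And>x. continuous (at_left x) v"
    using v(2) by (simp add: continuous_on_eq_continuous_within continuous_at_split)
  have VG: "TU v G \<in> M0" by (rule TU_in_M0[OF G borel_measurable_mono[OF v(1)]])
  note lim = tendsto_TD[OF VG d, of y]
  note TU_H = TU_mono_left_cont[OF H v(1) lc] and TU_G = TU_mono_left_cont[OF G v(1) lc]
  consider "{z. v z \<le> y} = {}" | "{z. v z \<le> y} = UNIV" | "{z. v z \<le> y} \<noteq> {}" "{z. v z \<le> y} \<noteq> UNIV"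
    by blast
  then show "TU v (TD d G) y = TD d (TU v G) y"
  proof cases
    case 1
    then have "TU v G y = 0" "TU v (TD d G) y = 0" using TU_G[of y] TU_H[of y] by simp_all
    then have "((\<lambda>y. d (TU v G y)) \<longlongrightarrow> d 0) (at_right y)"
      using hatFD_D(3,5)[OF d] M0_tendsto_at_right[OF VG, of y] M0_nonneg[OF VG]
      by (intro tendsto_compose_right_cont[of d 0 "TU v G"]) auto
    then show ?thesis
      using tendsto_unique[OF _ lim] hatFD_D(3)[OF d] \<open>TU v (TD d G) y = 0\<close> by simp
  next
    case 2
    then have "v z \<le> y" for z by (metis UNIV_I mem_Collect_eq)
    then have one: "TU v G y' = 1" if "y < y'" for y'
      using TU_G[of y'] that by (metis (mono_tags) UNIV_eq_I empty_iff mem_Collect_eq order.trans less_imp_le)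
    have "eventually (\<lambda>y'. d (TU v G y') = 1) (at_right y)"
      using eventually_at_right_less[of y] by eventually_elim (simp add: one hatFD_D(4)[OF d])
    then have "((\<lambda>y. d (TU v G y)) \<longlongrightarrow> 1) (at_right y)" by (rule tendsto_eventually)
    then show ?thesis using tendsto_unique[OF _ lim] 2 TU_H[of y] by simp
  next
    case 3
    then show ?thesis
      using tendsto_unique[OF _ lim tendsto_TD_TU_upper_inverse[OF G d v 3]] TU_H[of y] by auto
  qed
qed

section \<open>Increasing homeomorphisms of \<open>[0,1]\<close>\<close>

lemma eventually_greater_mono_on_interval_image:
  fixes f :: "real \<Rightarrow> real"
  assumes mono: "mono_on S f" and intv: "is_interval (f ` S)" and x: "x \<in> S" and a: "a < f x"
  shows "eventually (\<lambda>y. a < f y) (at x within S)"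
proof (cases "\<forall>s\<in>S. a < f s")
  case True then show ?thesis by (auto simp: eventually_at_filter)
next
  case False
  then obtain s where "s \<in> S" "f s \<le> a" by (auto simp: not_less)
  then obtain r where r: "r \<in> S" "f r = (a + f x) / 2"
    using mem_is_interval_1_I[OF intv, of "f s" "f x" "(a + f x) / 2"] x a by auto
  then have "r < x" using x a mono_onD[OF mono, of x r] by (cases "r < x") auto
  then have "eventually (\<lambda>y. r < y) (at x within S)"
    by (intro order_tendstoD(1)[OF tendsto_ident_at])
  moreover have "eventually (\<lambda>y. y \<in> S) (at x within S)" by (simp add: eventually_at_filter)
  ultimately show ?thesis
  proof eventually_elim
    case (elim y)
    then have "f r \<le> f y" using mono_onD[OF mono r(1)] by simp
    then show ?case using r a by simp
  qed
qed

lemma eventually_less_mono_on_interval_image: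
  fixes f :: "real \<Rightarrow> real"
  assumes mono: "mono_on S f" and intv: "is_interval (f ` S)" and x: "x \<in> S" and a: "f x < a"
  shows "eventually (\<lambda>y. f y < a) (at x within S)"
proof (cases "\<forall>s\<in>S. f s < a")
  case True then show ?thesis by (auto simp: eventually_at_filter)
next
  case False
  then obtain s where "s \<in> S" "a \<le> f s" by (auto simp: not_less)
  then obtain r where r: "r \<in> S" "f r = (a + f x) / 2"
    using mem_is_interval_1_I[OF intv, of "f x" "f s" "(a + f x) / 2"] x a by auto
  then have "x < r" using x a mono_onD[OF mono, of r x] by (cases "x < r") auto
  then have "eventually (\<lambda>y. y < r) (at x within S)"
    by (intro order_tendstoD(2)[OF tendsto_ident_at])
  moreover have "eventually (\<lambda>y. y \<in> S) (at x within S)" by (simp add: eventually_at_filter)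
  ultimately show ?thesis
  proof eventually_elim
    case (elim y)
    then have "f y \<le> f r" using mono_onD[OF mono _ r(1)] by simp
    then show ?case using r a by simp
  qed
qed

lemma continuous_on_mono_on_interval_image:
  fixes f :: "real \<Rightarrow> real"
  assumes mono: "mono_on S f" and intv: "is_interval (f ` S)"
  shows "continuous_on S f"
  unfolding continuous_on_def
proof (intro ballI order_tendstoI)
  fix x a assume "x \<in> S"
  then show "a < f x \<Longrightarrow> eventually (\<lambda>y. a < f y) (at x within S)"
    and "f x < a \<Longrightarrow> eventually (\<lambda>y. f y < a) (at x within S)"
    by (simp_all add: eventually_greater_mono_on_interval_image[OF mono intv]
        eventually_less_mono_on_interval_image[OF mono intv])
qed

definition homeo01 :: "(real \<Rightarrow> real) \<Rightarrow> bool" where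
  "homeo01 p \<longleftrightarrow> continuous_on {0..1} p \<and> strict_mono_on {0..1} p \<and> p 0 = 0 \<and> p 1 = 1"

lemma homeo01_range: "homeo01 p \<Longrightarrow> x \<in> {0..1} \<Longrightarrow> p x \<in> {0..1}"
  using strict_mono_on_less_eq[of "{0..1}" p 0 x] strict_mono_on_less_eq[of "{0..1}" p x 1]
  by (auto simp: homeo01_def)

lemma homeo01_image: assumes "homeo01 p" shows "p ` {0..1} = {0..1}"
proof (intro equalityI subsetI)
  fix y :: real assume "y \<in> {0..1}"
  then have "\<exists>x. 0 \<le> x \<and> x \<le> 1 \<and> p x = y"
    using assms by (intro IVT'[of p 0 y 1]) (auto simp: homeo01_def)
  then show "y \<in> p ` {0..1}" by auto
qed (use homeo01_range[OF assms] in auto)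

lemma homeo01_if_strict_mono_on_onto:
  assumes sm: "strict_mono_on {0..1} d" and onto: "d ` {0..1} = {0..1}"
  shows "homeo01 d"
proof -
  have mono: "mono_on {0..1} d" by (rule strict_mono_on_imp_mono_on[OF sm])
  have "is_interval (d ` {0..1})" unfolding onto by (rule is_interval_cc)
  then have cont: "continuous_on {0..1} d" by (rule continuous_on_mono_on_interval_image[OF mono])
  have "0 \<in> d ` {0..1}" "1 \<in> d ` {0..1}" unfolding onto by auto
  then obtain r s where r: "0 = d r" "r \<in> {0..1}" and s: "1 = d s" "s \<in> {0..1}" by (elim imageE)
  have "d 0 \<in> d ` {0..1}" "d 1 \<in> d ` {0..1}" by auto
  then have "0 \<le> d 0" "d 1 \<le> 1" unfolding onto by auto
  moreover have "d 0 \<le> d r" "d s \<le> d 1" using mono_onD[OF mono] r(2) s(2) by auto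
  ultimately have "d 0 = 0" "d 1 = 1" using r(1) s(1) by auto
  then show ?thesis using cont sm by (simp add: homeo01_def)
qed

lemma homeo01_tendsto_at_left:
  assumes "homeo01 p" "x \<in> {0<..1}" shows "(p \<longlongrightarrow> p x) (at_left x)"
proof -
  have "continuous_on {0..x} p"
    using assms by (auto simp: homeo01_def intro: continuous_on_subset)
  then show ?thesis by (rule continuous_on_Icc_at_leftD) (use assms in auto)
qed

lemma homeo01_right_cont_01: "homeo01 p \<Longrightarrow> right_cont_01 p"
  by (simp add: homeo01_def right_cont_01_if_continuous_on)

lemma homeo01_in_hatFD: assumes "homeo01 p" shows "p \<in> hatFD"
proof -
  have "(p \<longlongrightarrow> p 0) (at_right 0)"
    using homeo01_right_cont_01[OF assms] by (simp add: right_cont_01_def)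
  moreover have "(p \<longlongrightarrow> p 1) (at_left 1)" by (rule homeo01_tendsto_at_left[OF assms]) simp
  ultimately show ?thesis
    using assms homeo01_range[OF assms] strict_mono_on_imp_mono_on
    by (auto simp: hatFD_def homeo01_def)
qed

lemma homeo01_ident: "homeo01 (\<lambda>t. t)"
  by (auto simp: homeo01_def strict_mono_on_def)

lemma homeo01_inverse:
  assumes p: "homeo01 p"
  defines "q \<equiv> the_inv_into {0..1} p"
  shows "homeo01 q" "\<And>x. x \<in> {0..1} \<Longrightarrow> q (p x) = x" "\<And>x. x \<in> {0..1} \<Longrightarrow> p (q x) = x"
proof -
  have sm: "strict_mono_on {0..1} p" using p by (simp add: homeo01_def)
  have inj: "inj_on p {0..1}" by (rule strict_mono_on_imp_inj_on[OF sm])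
  have bij: "bij_betw p {0..1} {0..1}" using inj homeo01_image[OF p] by (simp add: bij_betw_def)
  show qp: "\<And>x. x \<in> {0..1} \<Longrightarrow> q (p x) = x" unfolding q_def using inj by (simp add: the_inv_into_f_f)
  show pq: "\<And>x. x \<in> {0..1} \<Longrightarrow> p (q x) = x"
    unfolding q_def using inj homeo01_image[OF p] by (simp add: f_the_inv_into_f)
  have onto: "q ` {0..1} = {0..1}" unfolding q_def using bij_betw_the_inv_into[OF bij] by (simp add: bij_betw_def)
  have "strict_mono_on {0..1} q"
  proof (rule strict_mono_onI)
    fix x y :: real assume xy: "x \<in> {0..1}" "y \<in> {0..1}" "x < y"
    then have "q x \<in> {0..1}" "q y \<in> {0..1}" using onto by auto
    then show "q x < q y" using strict_mono_on_less[OF sm, of "q x" "q y"] pq xy by simp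
  qed
  then show "homeo01 q" using onto by (rule homeo01_if_strict_mono_on_onto)
qed

lemma homeo01_eq_if_le_iff:
  assumes d: "homeo01 d" and \<alpha>: "\<alpha> \<in> {0..1}" and \<beta>: "\<beta> \<in> {0..1}"
    and iff: "\<And>p. 0 < p \<Longrightarrow> p < 1 \<Longrightarrow> d p \<le> \<beta> \<longleftrightarrow> p \<le> \<alpha>"
  shows "\<beta> = d \<alpha>"
proof (rule ccontr)
  have sm: "strict_mono_on {0..1} d" and d01: "d 0 = 0" "d 1 = 1" using d by (auto simp: homeo01_def)
  have d\<alpha>: "d \<alpha> \<in> {0..1}" by (rule homeo01_range[OF d \<alpha>])
  assume "\<beta> \<noteq> d \<alpha>"
  then have "(\<beta> + d \<alpha>) / 2 \<in> d ` {0..1}" using \<beta> d\<alpha> homeo01_image[OF d] by auto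
  then obtain p where p: "(\<beta> + d \<alpha>) / 2 = d p" "p \<in> {0..1}" by (elim imageE)
  have "0 < p" "p < 1" using p \<beta> d\<alpha> \<open>\<beta> \<noteq> d \<alpha>\<close> d01 by (auto simp: less_le)
  then have "d p \<le> \<beta> \<longleftrightarrow> d p \<le> d \<alpha>" using iff strict_mono_on_less_eq[OF sm p(2) \<alpha>] by simp
  then show False using p(1) \<open>\<beta> \<noteq> d \<alpha>\<close> by auto
qed

definition kink :: "real \<Rightarrow> real \<Rightarrow> real \<Rightarrow> real" where
  "kink m v t = (if t \<le> v then t * (m / v) else m + (t - v) * ((1 - m) / (1 - v)))"

lemma homeo01_kink:
  assumes m: "0 < m" "m < 1" and v: "0 < v" "v < 1"
  shows "homeo01 (kink m v)" "kink m v v = m"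
proof -
  have k1: "m / v > 0" and k2: "(1 - m) / (1 - v) > 0" using m v by auto
  show "kink m v v = m" using v by (simp add: kink_def)
  have "continuous_on {0..1} (kink m v)"
    unfolding kink_def[abs_def]
    by (rule continuous_on_cases_le[where h = "\<lambda>t. t"]) (use v in \<open>auto intro!: continuous_intros\<close>)
  moreover have "strict_mono_on {0..1} (kink m v)"
  proof (rule strict_mono_onI)
    fix a b :: real assume ab: "a \<in> {0..1}" "b \<in> {0..1}" "a < b"
    have "a * (m / v) < b * (m / v)" using mult_strict_right_mono[OF ab(3) k1] .
    moreover have "(a - v) * ((1 - m) / (1 - v)) < (b - v) * ((1 - m) / (1 - v))"
      by (rule mult_strict_right_mono[OF _ k2]) (use ab in simp)
    moreover have "a * (m / v) \<le> m" if "a \<le> v"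
      using mult_right_mono[OF that less_imp_le[OF k1]] v by simp
    moreover have "m < m + (b - v) * ((1 - m) / (1 - v))" if "\<not> b \<le> v"
      using mult_pos_pos[OF _ k2, of "b - v"] that by simp
    ultimately show "kink m v a < kink m v b" using ab by (auto simp: kink_def)
  qed
  ultimately show "homeo01 (kink m v)" using v by (simp add: homeo01_def kink_def)
qed

section \<open>Test distributions and distortions\<close>

definition two_point :: "real \<Rightarrow> real \<Rightarrow> real \<Rightarrow> real \<Rightarrow> real" where
  "two_point q x h = (\<lambda>t. if t < x then 0 else if t < x + h then q else 1)"

lemma two_point_in_M0: assumes "0 \<le> q" "q \<le> 1" "h > 0" shows "two_point q x h \<in> M0"
proof -
  have "eventually (\<lambda>s. two_point q x h s = two_point q x h t) (at_right t)" for t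
    unfolding eventually_at_right_field
    by (cases "t < x"; cases "t < x + h")
      (auto simp: two_point_def intro: exI[of _ x] exI[of _ "x + h"] exI[of _ "t + 1"])
  then have "continuous (at_right t) (two_point q x h)" for t
    unfolding continuous_within by (rule tendsto_eventually)
  moreover have "(two_point q x h \<longlongrightarrow> 0) at_bot"
    by (rule tendsto_eventually) (auto simp: eventually_at_bot_linorder two_point_def intro!: exI[of _ "x - 1"])
  moreover have "(two_point q x h \<longlongrightarrow> 1) at_top"
    by (rule tendsto_eventually)
      (use assms in \<open>auto simp: eventually_at_top_linorder two_point_def intro!: exI[of _ "x + h"]\<close>)
  ultimately show ?thesis using assms by (auto simp: M0_def mono_def two_point_def)
qed

definition logistic :: "real \<Rightarrow> real" where
  "logistic x = 1 / (1 + exp (- x))"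

lemma logistic_pos: "0 < logistic x" and logistic_less_1: "logistic x < 1"
  unfolding logistic_def by (auto simp: add_pos_pos)

lemma logistic_in_M0: "logistic \<in> M0"
proof -
  have "mono logistic" by (auto simp: mono_def logistic_def add_pos_pos intro!: divide_left_mono)
  moreover have "continuous (at_right t) logistic" for t
    unfolding logistic_def by (intro continuous_intros) (use exp_gt_zero[of "- t"] in linarith)
  moreover have "(logistic \<longlongrightarrow> 0) at_bot"
  proof (rule tendsto_sandwich[of "\<lambda>_. 0" _ _ exp])
    have "logistic x \<le> exp x" for x
    proof -
      have "1 / (1 + exp (- x)) \<le> 1 / exp (- x)" by (rule divide_left_mono) (auto simp: add_pos_pos)
      moreover have "1 / exp (- x) = exp x" by (simp add: exp_minus divide_inverse)
      ultimately show ?thesis unfolding logistic_def by linarith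
    qed
    then show "eventually (\<lambda>x. logistic x \<le> exp x) at_bot" by simp
  qed (simp_all add: less_imp_le[OF logistic_pos] exp_at_bot)
  moreover have "(logistic \<longlongrightarrow> 1) at_top"
  proof -
    have "((\<lambda>x::real. exp (- x)) \<longlongrightarrow> 0) at_top"
      by (rule filterlim_compose[OF exp_at_bot filterlim_uminus_at_bot_at_top])
    then have "((\<lambda>x::real. 1 / (1 + exp (- x))) \<longlongrightarrow> 1 / (1 + 0)) at_top"
      by (intro tendsto_intros) auto
    then show ?thesis by (simp add: logistic_def[abs_def])
  qed
  ultimately show ?thesis by (simp add: M0_def)
qed

definition uniform_cdf :: "real \<Rightarrow> real \<Rightarrow> real" where
  "uniform_cdf z t = max 0 (min 1 ((t - z + 1) / 2))"

lemma uniform_cdf_in_M0: "uniform_cdf z \<in> M0"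
proof -
  have "mono (uniform_cdf z)"
  proof (rule monoI)
    fix x y :: real assume "x \<le> y"
    then have "(x - z + 1) / 2 \<le> (y - z + 1) / 2" by (simp add: divide_right_mono)
    then show "uniform_cdf z x \<le> uniform_cdf z y"
      unfolding uniform_cdf_def by (intro max.mono min.mono) auto
  qed
  moreover have "continuous (at_right t) (uniform_cdf z)" for t
    unfolding uniform_cdf_def by (intro continuous_intros) auto
  moreover have "(uniform_cdf z \<longlongrightarrow> 0) at_bot"
    by (rule tendsto_eventually)
      (auto simp: eventually_at_bot_linorder uniform_cdf_def intro!: exI[of _ "z - 1"])
  moreover have "(uniform_cdf z \<longlongrightarrow> 1) at_top"
    by (rule tendsto_eventually)
      (auto simp: eventually_at_top_linorder uniform_cdf_def intro!: exI[of _ "z + 1"])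
  ultimately show ?thesis by (simp add: M0_def)
qed

definition clamp :: "real \<Rightarrow> real \<Rightarrow> real \<Rightarrow> real" where
  "clamp a b z = min (max z a) b"

lemma mono_clamp: "a < b \<Longrightarrow> mono (clamp a b)"
  and continuous_on_clamp: "continuous_on UNIV (clamp a b)"
  unfolding clamp_def by (auto simp: mono_def intro!: continuous_intros)

lemma TU_clamp:
  assumes H: "H \<in> M0" and ab: "a < b"
  shows "TU (clamp a b) H = (\<lambda>t. if t < a then 0 else if t < b then H t else 1)"
proof
  fix t
  interpret real_distribution "interval_measure H" by (rule real_distribution_M0[OF H])
  have "clamp a b \<in> borel_measurable borel" unfolding clamp_def by measurable
  then have e: "TU (clamp a b) H t = prob {z. clamp a b z \<le> t}" by (rule TU_eq_measure[OF H])
  have "{z. clamp a b z \<le> t} = (if t < a then {} else if t < b then {..t} else UNIV)"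
    using ab by (auto simp: clamp_def)
  then show "TU (clamp a b) H t = (if t < a then 0 else if t < b then H t else 1)"
    using e measure_atMost_M0[OF H] prob_space by simp
qed

definition threshold :: "real \<Rightarrow> real \<Rightarrow> real" where
  "threshold p = (\<lambda>t. if p \<le> t then 1 else 0)"

lemma threshold_in_hatFD: "0 < p \<Longrightarrow> p < 1 \<Longrightarrow> threshold p \<in> hatFD"
  unfolding hatFD_def
  by (auto simp: mono_on_def threshold_def eventually_at_right_field eventually_at_left_field
      intro!: tendsto_eventually exI[of _ p])

lemma right_cont_01_threshold: "right_cont_01 (threshold p)"
proof -
  have "eventually (\<lambda>t. threshold p t = threshold p x) (at_right x)" for x
    unfolding eventually_at_right_field
    by (cases "p \<le> x") (auto simp: threshold_def intro: exI[of _ "x + 1"] exI[of _ p])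
  then show ?thesis unfolding right_cont_01_def by (auto intro: tendsto_eventually)
qed

lemma TD_threshold_eq_delta:
  assumes "F \<in> M0" "0 < p" "p < 1"
  obtains q where "TD (threshold p) F = delta q"
proof (rule M0_two_valued_eq_delta)
  show "TD (threshold p) F \<in> M0"
    using assms by (intro TD_in_M0 threshold_in_hatFD right_cont_01_threshold)
  show "TD (threshold p) F x = 0 \<or> TD (threshold p) F x = 1" for x
    using TD_eq_comp[OF assms(1) threshold_in_hatFD[OF assms(2,3)] right_cont_01_threshold]
    by (simp add: threshold_def)
qed

lemma TD_threshold_uniform_cdf:
  assumes "0 < p" "p < 1"
  shows "TD (threshold p) (uniform_cdf z) = delta (z - 1 + 2 * p)"
proof -
  have "p \<le> max 0 (min 1 w) \<longleftrightarrow> p \<le> w" for w :: real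
    using assms by (auto simp: max_def min_def)
  then have "p \<le> uniform_cdf z t \<longleftrightarrow> z - 1 + 2 * p \<le> t" for t
    by (auto simp: uniform_cdf_def field_simps)
  then show ?thesis
    using TD_eq_comp[OF uniform_cdf_in_M0 threshold_in_hatFD[OF assms] right_cont_01_threshold]
    by (auto simp: threshold_def delta_def)
qed

lemma comp_left_eq_comp_right_iff:
  "comp_left \<T> T = comp_right T \<T> \<longleftrightarrow>
     (\<forall>T1\<in>\<T>. \<exists>T2\<in>\<T>. \<forall>F\<in>M0. T1 (T F) = T (T2 F)) \<and>
     (\<forall>T2\<in>\<T>. \<exists>T1\<in>\<T>. \<forall>F\<in>M0. T1 (T F) = T (T2 F))"
proof -
  have restrict_eq: "restrict f M0 = restrict g M0 \<longleftrightarrow> (\<forall>F\<in>M0. f F = g F)" for f g :: "_ \<Rightarrow> real \<Rightarrow> real"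
    by (metis restrict_apply' restrict_ext)
  have L: "comp_left \<T> T = (\<lambda>T1. restrict (\<lambda>F. T1 (T F)) M0) ` \<T>" by (auto simp: comp_left_def)
  have R: "comp_right T \<T> = (\<lambda>T2. restrict (\<lambda>F. T (T2 F)) M0) ` \<T>" by (auto simp: comp_right_def)
  show ?thesis
    unfolding L R set_eq_subset image_subset_iff image_iff restrict_eq by (simp add: eq_commute)
qed

locale monotone_M0_map =
  fixes T :: "(real \<Rightarrow> real) \<Rightarrow> real \<Rightarrow> real"
  assumes T_M0: "F \<in> M0 \<Longrightarrow> T F \<in> M0" and T_monotone: "monotone_map T"
begin

lemma T_st_le: "F \<in> M0 \<Longrightarrow> G \<in> M0 \<Longrightarrow> st_le F G \<Longrightarrow> st_le (T F) (T G)"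
  using T_monotone by (auto simp: monotone_map_def)

end

locale point_mass_map = monotone_M0_map +
  assumes T_delta_ex: "\<exists>y. T (delta x) = delta y"
begin

definition u :: "real \<Rightarrow> real" where
  "u x = (SOME y. T (delta x) = delta y)"

lemma T_delta: "T (delta x) = delta (u x)"
  unfolding u_def using T_delta_ex by (rule someI_ex)

lemma mono_u: "mono u"
proof (rule monoI)
  fix x y :: real assume "x \<le> y"
  then have "st_le (T (delta x)) (T (delta y))"
    by (intro T_st_le delta_in_M0) (simp add: st_le_delta_iff)
  then show "u x \<le> u y" by (simp add: T_delta st_le_delta_iff)
qed

end

section \<open>Commuting with \<open>\<U>\<close>\<close>

lemma continuous_on_strict_mono_surj:
  fixes u :: "real \<Rightarrow> real"
  assumes "strict_mono u" "surj u"
  shows "continuous_on UNIV u"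
  using assms by (intro continuous_on_mono_on_interval_image) (simp_all add: strict_mono_mono)

lemma strict_mono_surj_inv:
  fixes u :: "real \<Rightarrow> real"
  assumes "strict_mono u" "surj u"
  shows "strict_mono (inv u)" "surj (inv u)"
proof -
  have "inj u" using assms(1) by (rule strict_mono_imp_inj_on)
  show "strict_mono (inv u)" by (rule strict_mono_inv[OF assms]) (simp add: \<open>inj u\<close>)
  show "surj (inv u)" using \<open>inj u\<close> by (metis inv_f_f surjI)
qed

lemma mono_continuous_conjugate:
  fixes u w :: "real \<Rightarrow> real"
  assumes u: "strict_mono u" "surj u" and w: "mono w" "continuous_on UNIV w"
  shows "mono (inv u \<circ> w \<circ> u)" "continuous_on UNIV (inv u \<circ> w \<circ> u)"
    "mono (u \<circ> w \<circ> inv u)" "continuous_on UNIV (u \<circ> w \<circ> inv u)"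
proof -
  note g = strict_mono_surj_inv[OF u]
  have mono: "mono u" "mono (inv u)" using strict_mono_mono u(1) g(1) by blast+
  show "mono (inv u \<circ> w \<circ> u)" "mono (u \<circ> w \<circ> inv u)"
    by (simp_all add: mono_def monoD[OF mono(1)] monoD[OF mono(2)] monoD[OF w(1)])
  have "continuous_on UNIV u" "continuous_on UNIV (inv u)"
    using continuous_on_strict_mono_surj[OF u] continuous_on_strict_mono_surj[OF g] .
  then have cont: "isCont u x" "isCont (inv u) x" "isCont w x" for x
    using w(2) by (simp_all add: continuous_on_eq_continuous_at)
  have "isCont (inv u \<circ> w \<circ> u) x" "isCont (u \<circ> w \<circ> inv u) x" for x
    by (intro continuous_at_compose cont)+
  then show "continuous_on UNIV (inv u \<circ> w \<circ> u)" "continuous_on UNIV (u \<circ> w \<circ> inv u)"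
    by (simp_all add: continuous_on_eq_continuous_at comp_def)
qed

lemma TU_TD_TU_intertwine:
  assumes F: "F \<in> M0" and d: "d \<in> hatFD" and u: "mono u" and H: "TD d (TU u F) \<in> M0"
    and v: "mono v" "continuous_on UNIV v" and w: "mono w" and uw: "u \<circ> w = v \<circ> u"
  shows "TU v (TD d (TU u F)) = TD d (TU u (TU w F))"
proof -
  have mu: "u \<in> borel_measurable borel" and mv: "v \<in> borel_measurable borel"
    and mw: "w \<in> borel_measurable borel"
    using u v w by (simp_all add: borel_measurable_mono)
  have "TD d (TU u (TU w F)) = TD d (TU (v \<circ> u) F)" by (simp add: TU_TU[OF F mw mu] uw)
  also have "\<dots> = TD d (TU v (TU u F))" by (simp add: TU_TU[OF F mu mv])
  also have "\<dots> = TU v (TD d (TU u F))"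
    by (rule TU_TD_commute[symmetric, OF TU_in_M0[OF F mu] d H v])
  finally show ?thesis ..
qed

theorem commutes_Ucal_if_TD_TU:
  assumes T: "\<forall>F\<in>M0. T F \<in> M0" and d: "d \<in> hatFD" and u: "strict_mono u" "surj u"
    and T_eq: "\<forall>F\<in>M0. T F = TD d (TU u F)"
  shows "comp_left Ucal T = comp_right T Ucal"
proof -
  let ?g = "inv u"
  have ug: "u (?g y) = y" for y using u(2) by (simp add: surj_f_inv_f)
  have gu: "?g (u x) = x" for x using strict_mono_imp_inj_on[OF u(1)] by simp
  have swap: "TU v (T F) = T (TU w F)"
    if "F \<in> M0" "mono v" "continuous_on UNIV v" "mono w" "u \<circ> w = v \<circ> u" for F v w
  proof -
    have "TU w F \<in> M0" using TU_in_M0[OF that(1) borel_measurable_mono[OF that(4)]] .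
    then show ?thesis
      using TU_TD_TU_intertwine[of F d u v w] that d strict_mono_mono[OF u(1)] T T_eq by simp
  qed
  show ?thesis
    unfolding comp_left_eq_comp_right_iff
  proof (intro conjI ballI)
    fix T1 assume "T1 \<in> Ucal"
    then obtain v where v: "T1 = TU v" "mono v" "continuous_on UNIV v" by (auto simp: Ucal_def)
    define w where "w = ?g \<circ> v \<circ> u"
    have uw: "u \<circ> w = v \<circ> u" by (auto simp: w_def ug)
    have w: "mono w" "continuous_on UNIV w"
      unfolding w_def using mono_continuous_conjugate[OF u v(2,3)] by simp_all
    then have "TU w \<in> Ucal" by (auto simp: Ucal_def)
    moreover have "\<forall>F\<in>M0. T1 (T F) = T (TU w F)" using swap[OF _ v(2,3) w(1) uw] v(1) by simp
    ultimately show "\<exists>T2\<in>Ucal. \<forall>F\<in>M0. T1 (T F) = T (T2 F)" by blast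
  next
    fix T2 assume "T2 \<in> Ucal"
    then obtain w where w: "T2 = TU w" "mono w" "continuous_on UNIV w" by (auto simp: Ucal_def)
    define v where "v = u \<circ> w \<circ> ?g"
    have uw: "u \<circ> w = v \<circ> u" by (auto simp: v_def gu)
    have v: "mono v" "continuous_on UNIV v"
      unfolding v_def using mono_continuous_conjugate[OF u w(2,3)] by simp_all
    then have "TU v \<in> Ucal" by (auto simp: Ucal_def)
    moreover have "\<forall>F\<in>M0. TU v (T F) = T (T2 F)" using swap[OF _ v w(2) uw] w(1) by simp
    ultimately show "\<exists>T1\<in>Ucal. \<forall>F\<in>M0. T1 (T F) = T (T2 F)" by blast
  qed
qed

locale Ucal_equivariant =
  fixes S :: "(real \<Rightarrow> real) \<Rightarrow> real \<Rightarrow> real"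
  assumes S_M0: "G \<in> M0 \<Longrightarrow> S G \<in> M0"
    and S_monotone: "G \<in> M0 \<Longrightarrow> H \<in> M0 \<Longrightarrow> st_le G H \<Longrightarrow> st_le (S G) (S H)"
    and S_TU: "G \<in> M0 \<Longrightarrow> mono w \<Longrightarrow> continuous_on UNIV w \<Longrightarrow> S (TU w G) = TU w (S G)"
begin

definition distortion :: "real \<Rightarrow> real" where
  "distortion p = S (two_point p 0 1) 0"

lemma S_delta: "S (delta x) = delta x"
proof -
  have "S (TU (\<lambda>_. x) (delta 0)) = TU (\<lambda>_. x) (S (delta 0))"
    by (rule S_TU[OF delta_in_M0]) (simp_all add: mono_def)
  then show ?thesis using TU_const[OF delta_in_M0, of x] TU_const[OF S_M0[OF delta_in_M0], of x] by simp
qed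

lemma S_two_point:
  assumes "0 \<le> q" "q \<le> 1" "h > 0"
  shows "S (two_point q x h) x = distortion q"
proof -
  have K: "two_point q 0 1 \<in> M0" using assms by (intro two_point_in_M0) auto
  have w: "mono (\<lambda>z. x + h * z)" "continuous_on UNIV (\<lambda>z. x + h * z)"
    using assms(3) by (auto simp: mono_def intro!: continuous_intros)
  have "TU (\<lambda>z. x + h * z) (two_point q 0 1) = two_point q x h"
    unfolding TU_affine[OF K assms(3)] using assms(3) by (auto simp: two_point_def field_simps)
  then have "S (two_point q x h) = TU (\<lambda>z. x + h * z) (S (two_point q 0 1))"
    using S_TU[OF K w] by simp
  also have "\<dots> = (\<lambda>y. S (two_point q 0 1) ((y - x) / h))" by (rule TU_affine[OF S_M0[OF K] assms(3)])
  finally show ?thesis by (simp add: distortion_def)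
qed

text \<open>Clamping \<open>G\<close> to \<open>[x, y]\<close> does not change \<open>S G\<close> at \<open>x\<close>, and the clamped
  distribution lies between two two-point distributions with masses \<open>G x\<close> and \<open>G y\<close> at \<open>x\<close>.\<close>

lemma S_clamp:
  assumes G: "G \<in> M0" and xy: "x < y"
  shows "S (TU (clamp x y) G) x = S G x"
  using S_TU[OF G mono_clamp[OF xy] continuous_on_clamp] TU_clamp[OF S_M0[OF G] xy] xy by simp

lemma distortion_le_S: assumes G: "G \<in> M0" shows "distortion (G x) \<le> S G x"
proof -
  let ?Gc = "TU (clamp x (x + 1)) G"
  have Gc: "?Gc \<in> M0" by (rule TU_in_M0[OF G borel_measurable_mono[OF mono_clamp]]) simp
  have K: "two_point (G x) x 1 \<in> M0" using M0_nonneg[OF G] M0_le_1[OF G] by (intro two_point_in_M0) auto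
  have "st_le ?Gc (two_point (G x) x 1)"
    unfolding st_le_def TU_clamp[OF G, of x "x + 1", simplified] two_point_def
    using monoD[OF M0D(1)[OF G]] by auto
  then have "S (two_point (G x) x 1) x \<le> S ?Gc x" using S_monotone[OF Gc K] by (simp add: st_le_def)
  then show ?thesis
    using S_two_point[of "G x" 1 x] M0_nonneg[OF G] M0_le_1[OF G] S_clamp[OF G, of x "x + 1"] by simp
qed

lemma S_le_distortion: assumes G: "G \<in> M0" and xy: "x < y" shows "S G x \<le> distortion (G y)"
proof -
  let ?Gc = "TU (clamp x y) G"
  have Gc: "?Gc \<in> M0" by (rule TU_in_M0[OF G borel_measurable_mono[OF mono_clamp[OF xy]]])
  have K: "two_point (G y) x (y - x) \<in> M0"
    using M0_nonneg[OF G] M0_le_1[OF G] xy by (intro two_point_in_M0) auto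
  have "st_le (two_point (G y) x (y - x)) ?Gc"
    unfolding st_le_def TU_clamp[OF G xy] two_point_def using monoD[OF M0D(1)[OF G]] by auto
  then have "S ?Gc x \<le> S (two_point (G y) x (y - x)) x" using S_monotone[OF K Gc] by (simp add: st_le_def)
  then show ?thesis
    using S_two_point[of "G y" "y - x" x] xy M0_nonneg[OF G] M0_le_1[OF G] S_clamp[OF G xy] by simp
qed

lemma distortion_mono: "0 \<le> p \<Longrightarrow> p \<le> q \<Longrightarrow> q \<le> 1 \<Longrightarrow> distortion p \<le> distortion q"
proof -
  assume pq: "0 \<le> p" "p \<le> q" "q \<le> 1"
  have "st_le (two_point q 0 1) (two_point p 0 1)" using pq by (auto simp: st_le_def two_point_def)
  then have "st_le (S (two_point q 0 1)) (S (two_point p 0 1))"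
    using pq by (intro S_monotone two_point_in_M0) auto
  then show "distortion p \<le> distortion q" by (simp add: st_le_def distortion_def)
qed

lemma distortion_range: "0 \<le> p \<Longrightarrow> p \<le> 1 \<Longrightarrow> distortion p \<in> {0..1}"
  unfolding distortion_def using S_M0[OF two_point_in_M0[of p 1 0]] M0_nonneg M0_le_1 by auto

lemma distortion_0: "distortion 0 = 0" and distortion_1: "distortion 1 = 1"
proof -
  have "two_point 0 0 1 = delta 1" "two_point 1 0 1 = delta 0" by (auto simp: two_point_def delta_def)
  then have "distortion 0 = delta 1 0" "distortion 1 = delta 0 0"
    unfolding distortion_def by (simp_all only: S_delta)
  then show "distortion 0 = 0" "distortion 1 = 1" by (simp_all add: delta_def)
qed

text \<open>The limits of \<open>distortion\<close> at \<open>0\<close> and \<open>1\<close> come from those of \<open>S\<close> applied to a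
  distribution with full support, here the logistic one.\<close>

lemma tendsto_distortion_at_right_0: "(distortion \<longlongrightarrow> 0) (at_right 0)"
proof (rule tendstoI)
  fix \<epsilon> :: real assume "\<epsilon> > 0"
  then have "eventually (\<lambda>x. S logistic x < \<epsilon>) at_bot"
    by (rule order_tendstoD(2)[OF M0D(3)[OF S_M0[OF logistic_in_M0]]])
  then obtain x where "S logistic x < \<epsilon>" by (auto simp: eventually_at_bot_linorder)
  then have dx: "distortion (logistic x) < \<epsilon>" using distortion_le_S[OF logistic_in_M0, of x] by simp
  have "dist (distortion t) 0 < \<epsilon>" if "0 < t" "t < logistic x" for t
    using that dx distortion_range[of t] distortion_mono[of t "logistic x"] logistic_less_1[of x] by auto
  then show "eventually (\<lambda>t. dist (distortion t) 0 < \<epsilon>) (at_right 0)"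
    using logistic_pos[of x] by (auto simp: eventually_at_right_field)
qed

lemma tendsto_distortion_at_left_1: "(distortion \<longlongrightarrow> 1) (at_left 1)"
proof (rule tendstoI)
  fix \<epsilon> :: real assume "\<epsilon> > 0"
  then have "eventually (\<lambda>x. 1 - \<epsilon> < S logistic x) at_top"
    using M0D(4)[OF S_M0[OF logistic_in_M0]] by (intro order_tendstoD) auto
  then obtain x where "1 - \<epsilon> < S logistic x" by (auto simp: eventually_at_top_linorder)
  then have dx: "1 - \<epsilon> < distortion (logistic (x + 1))"
    using S_le_distortion[OF logistic_in_M0, of x "x + 1"] by simp
  have "dist (distortion t) 1 < \<epsilon>" if "logistic (x + 1) < t" "t < 1" for t
    using that dx distortion_range[of t] distortion_mono[of "logistic (x + 1)" t] logistic_pos[of "x + 1"]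
    by (auto simp: dist_real_def)
  then show "eventually (\<lambda>t. dist (distortion t) 1 < \<epsilon>) (at_left 1)"
    using logistic_less_1[of "x + 1"] by (auto simp: eventually_at_left_field)
qed

lemma distortion_in_hatFD: "distortion \<in> hatFD"
  using distortion_range distortion_0 distortion_1 distortion_mono tendsto_distortion_at_right_0
    tendsto_distortion_at_left_1
  by (auto simp: hatFD_def mono_on_def)

theorem S_eq_TD: assumes G: "G \<in> M0" shows "S G = TD distortion G"
proof
  fix x
  have "((\<lambda>y. distortion (G y)) \<longlongrightarrow> S G x) (at_right x)"
  proof (rule tendsto_sandwich[of "\<lambda>_. S G x" _ _ "S G"])
    show "eventually (\<lambda>y. S G x \<le> distortion (G y)) (at_right x)"
      using eventually_at_right_less[of x] by eventually_elim (rule S_le_distortion[OF G])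
    show "eventually (\<lambda>y. distortion (G y) \<le> S G y) (at_right x)"
      using distortion_le_S[OF G] by simp
  qed (simp_all add: M0_tendsto_at_right[OF S_M0[OF G]])
  then show "S G x = TD distortion G x" unfolding TD_def by (intro tendsto_Lim[symmetric]) simp_all
qed

end

locale Ucal_commuting = monotone_M0_map +
  assumes Ucal_left: "mono v \<Longrightarrow> continuous_on UNIV v \<Longrightarrow>
      \<exists>w. mono w \<and> continuous_on UNIV w \<and> (\<forall>F\<in>M0. TU v (T F) = T (TU w F))"
    and Ucal_right: "mono w \<Longrightarrow> continuous_on UNIV w \<Longrightarrow>
      \<exists>v. mono v \<and> continuous_on UNIV v \<and> (\<forall>F\<in>M0. TU v (T F) = T (TU w F))"
begin

lemma delta_in_range_T: obtains p where "T (delta p) = delta c"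
proof -
  obtain w where w: "mono w" "\<forall>F\<in>M0. TU (\<lambda>_. c) (T F) = T (TU w F)"
    using Ucal_left[of "\<lambda>_. c"] by (auto simp: mono_def)
  have "TU (\<lambda>_. c) (T (delta 0)) = T (TU w (delta 0))" using w(2) delta_in_M0 by blast
  moreover have "TU (\<lambda>_. c) (T (delta 0)) = delta c" by (rule TU_const[OF T_M0[OF delta_in_M0]])
  moreover have "TU w (delta 0) = delta (w 0)" by (rule TU_delta[OF borel_measurable_mono[OF w(1)]])
  ultimately show ?thesis using that[of "w 0"] by simp
qed

lemma T_delta_eq_delta: "\<exists>y. T (delta x) = delta y"
proof -
  obtain v where v: "mono v" "\<forall>F\<in>M0. TU v (T F) = T (TU (\<lambda>_. x) F)"
    using Ucal_right[of "\<lambda>_. x"] by (auto simp: mono_def)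
  obtain p where p: "T (delta p) = delta 0" by (rule delta_in_range_T)
  have "T (delta x) = T (TU (\<lambda>_. x) (delta p))" by (simp add: TU_const delta_in_M0)
  also have "\<dots> = TU v (delta 0)" using v(2)[rule_format, OF delta_in_M0[of p]] p by simp
  also have "\<dots> = delta (v 0)" by (rule TU_delta[OF borel_measurable_mono[OF v(1)]])
  finally show ?thesis ..
qed

sublocale point_mass_map
  using monotone_M0_map_axioms T_delta_eq_delta
  by (simp add: point_mass_map_def point_mass_map_axioms_def)

lemma surj_u: "surj u"
proof -
  have "c \<in> range u" for c
  proof -
    obtain p where "T (delta p) = delta c" by (rule delta_in_range_T)
    then have "u p = c" by (simp add: T_delta)
    then show ?thesis using rangeI[of u p] by simp
  qed
  then show ?thesis by blast
qed

lemma u_intertwines: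
  assumes "mono w" "continuous_on UNIV w"
  obtains v where "mono v" "continuous_on UNIV v" "\<forall>F\<in>M0. TU v (T F) = T (TU w F)" "u \<circ> w = v \<circ> u"
proof -
  obtain v where v: "mono v" "continuous_on UNIV v" "\<forall>F\<in>M0. TU v (T F) = T (TU w F)"
    using Ucal_right[OF assms] by blast
  have "u (w z) = v (u z)" for z
  proof -
    have "delta (u (w z)) = T (TU w (delta z))"
      by (simp add: TU_delta[OF borel_measurable_mono[OF assms(1)]] T_delta)
    also have "\<dots> = TU v (T (delta z))" using v(3) delta_in_M0 by simp
    also have "\<dots> = delta (v (u z))" by (simp add: TU_delta[OF borel_measurable_mono[OF v(1)]] T_delta)
    finally show ?thesis by simp
  qed
  then show ?thesis using that v by (auto simp: fun_eq_iff)
qed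

text \<open>If \<open>u x = u y\<close> for some \<open>x < y\<close>, the affine map sending \<open>x, y\<close> to preimages of
  \<open>0, 1\<close> could not be intertwined with any map \<open>v\<close>.\<close>

lemma strict_mono_u: "strict_mono u"
proof (rule strict_monoI)
  fix x y :: real assume xy: "x < y"
  obtain a b where ab: "0 = u a" "1 = u b" using surjD[OF surj_u] by metis
  then have "a < b" using monoD[OF mono_u, of b a] by (cases "a < b") auto
  define w where "w = (\<lambda>z. a + (z - x) * ((b - a) / (y - x)))"
  have pos: "(b - a) / (y - x) > 0" using \<open>a < b\<close> xy by simp
  have "mono w"
  proof (rule monoI)
    fix z1 z2 :: real assume "z1 \<le> z2"
    then have "(z1 - x) * ((b - a) / (y - x)) \<le> (z2 - x) * ((b - a) / (y - x))"
      using pos by (intro mult_right_mono) auto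
    then show "w z1 \<le> w z2" unfolding w_def by linarith
  qed
  moreover have "continuous_on UNIV w" unfolding w_def by (intro continuous_intros)
  ultimately obtain v where uw: "u \<circ> w = v \<circ> u" by (rule u_intertwines)
  have "w x = a" "w y = b" using xy by (auto simp: w_def)
  show "u x < u y"
  proof (rule ccontr)
    assume "\<not> u x < u y"
    then have "u x = u y" using monoD[OF mono_u, of x y] xy by simp
    then have "u (w x) = u (w y)" using fun_cong[OF uw, of x] fun_cong[OF uw, of y] by simp
    then show False using ab \<open>w x = a\<close> \<open>w y = b\<close> by simp
  qed
qed

definition S :: "(real \<Rightarrow> real) \<Rightarrow> real \<Rightarrow> real" where
  "S G = T (TU (inv u) G)"

lemma inv_u: "u (inv u y) = y" "inv u (u x) = x"
  using surj_u strict_mono_imp_inj_on[OF strict_mono_u] by (simp_all add: surj_f_inv_f)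

lemma u_measurable: "u \<in> borel_measurable borel" and inv_u_measurable: "inv u \<in> borel_measurable borel"
  using strict_mono_mono[OF strict_mono_surj_inv(1)[OF strict_mono_u surj_u]] mono_u
  by (simp_all add: borel_measurable_mono)

lemma TU_inv_u: assumes "G \<in> M0" shows "TU (inv u) G y = G (u y)"
proof (rule TU_eq_of_adjoint[OF assms inv_u_measurable])
  fix z
  show "inv u z \<le> y \<longleftrightarrow> z \<le> u y"
    using strict_mono_less_eq[OF strict_mono_u, of "inv u z" y] by (simp add: inv_u)
qed

lemma Ucal_equivariant_S: "Ucal_equivariant S"
proof (unfold_locales)
  fix G assume G: "G \<in> M0"
  then show "S G \<in> M0" unfolding S_def by (intro T_M0 TU_in_M0 inv_u_measurable)
  fix H assume "H \<in> M0" "st_le G H"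
  then show "st_le (S G) (S H)"
    unfolding S_def using G by (intro T_st_le TU_in_M0 inv_u_measurable) (auto simp: st_le_def TU_inv_u)
next
  fix G w :: "real \<Rightarrow> real" assume G: "G \<in> M0" and w: "mono w" "continuous_on UNIV w"
  let ?w' = "inv u \<circ> w \<circ> u"
  have w': "mono ?w'" "continuous_on UNIV ?w'"
    using mono_continuous_conjugate[OF strict_mono_u surj_u w] by simp_all
  obtain v where v: "\<forall>F\<in>M0. TU v (T F) = T (TU ?w' F)" "u \<circ> ?w' = v \<circ> u"
    using u_intertwines[OF w'] by blast
  have "v = w"
  proof
    fix y
    have "v y = (v \<circ> u) (inv u y)" by (simp add: inv_u)
    then show "v y = w y" by (simp add: v(2)[symmetric] inv_u)
  qed
  have mw: "w \<in> borel_measurable borel" "?w' \<in> borel_measurable borel"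
    using w w' by (simp_all add: borel_measurable_mono)
  have "S (TU w G) = T (TU (inv u \<circ> w) G)" unfolding S_def by (simp add: TU_TU[OF G mw(1) inv_u_measurable])
  also have "inv u \<circ> w = ?w' \<circ> inv u" by (auto simp: inv_u)
  also have "T (TU (?w' \<circ> inv u) G) = T (TU ?w' (TU (inv u) G))"
    by (simp add: TU_TU[OF G inv_u_measurable mw(2)])
  also have "\<dots> = TU w (S G)" using v(1) TU_in_M0[OF G inv_u_measurable] \<open>v = w\<close> by (simp add: S_def)
  finally show "S (TU w G) = TU w (S G)" .
qed

sublocale S: Ucal_equivariant S by (rule Ucal_equivariant_S)

theorem T_eq_TD_TU: assumes F: "F \<in> M0" shows "T F = TD S.distortion (TU u F)"
proof -
  have "TU (inv u) (TU u F) = TU (inv u \<circ> u) F" by (rule TU_TU[OF F u_measurable inv_u_measurable])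
  also have "inv u \<circ> u = (\<lambda>x. x)" by (auto simp: inv_u)
  finally have "S (TU u F) = T F" by (simp add: S_def TU_ident[OF F])
  then show ?thesis using S.S_eq_TD[OF TU_in_M0[OF F u_measurable]] by simp
qed

end

section \<open>Commuting with \<open>\<D>'\<close>\<close>

lemma TD_TD_TU_intertwine:
  assumes F: "F \<in> M0" and d: "homeo01 d" and u: "mono u" "\<And>x. continuous (at_left x) u"
    and d': "d' \<in> hatFD" "right_cont_01 d'" and d'': "d'' \<in> hatFD" "right_cont_01 d''"
    and rel: "\<And>t. t \<in> {0..1} \<Longrightarrow> d' (d t) = d (d'' t)"
  shows "TD d' (TD d (TU u F)) = TD d (TU u (TD d'' F))"
proof -
  have dd: "d \<in> hatFD" "right_cont_01 d" using d by (simp_all add: homeo01_in_hatFD homeo01_right_cont_01)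
  have UF: "TU u F \<in> M0" by (rule TU_in_M0[OF F borel_measurable_mono[OF u(1)]])
  have "TD d' (TD d (TU u F)) = (\<lambda>y. d' (d (TU u F y)))"
    by (simp only: TD_eq_comp[OF TD_in_M0[OF UF dd] d']) (simp add: TD_eq_comp[OF UF dd])
  also have "\<dots> = (\<lambda>y. d (d'' (TU u F y)))" using rel M0_nonneg[OF UF] M0_le_1[OF UF] by simp
  also have "\<dots> = (\<lambda>y. d (TD d'' (TU u F) y))" by (simp add: TD_eq_comp[OF UF d''])
  also have "\<dots> = TD d (TU u (TD d'' F))"
    by (simp add: TU_TD_commute_right_cont[OF F d'' u] TD_eq_comp[OF TD_in_M0[OF UF d''] dd])
  finally show ?thesis .
qed

theorem commutes_Dcal'_if_TD_TU:
  assumes T: "\<forall>F\<in>M0. T F \<in> M0" and u: "mono u" "\<forall>x. continuous (at_left x) u"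
    and d: "homeo01 d" and T_eq: "\<forall>F\<in>M0. T F = TD d (TU u F)"
  shows "comp_left Dcal' T = comp_right T Dcal'"
proof -
  define di where "di = the_inv_into {0..1} d"
  note inv = homeo01_inverse[OF d, folded di_def]
  have hd: "d \<in> hatFD" "right_cont_01 d" and hdi: "di \<in> hatFD" "right_cont_01 di"
    using d inv(1) by (simp_all add: homeo01_in_hatFD homeo01_right_cont_01)
  have swap: "TD d' (T F) = T (TD d'' F)"
    if "F \<in> M0" "d' \<in> hatFD" "right_cont_01 d'" "d'' \<in> hatFD" "right_cont_01 d''"
      "\<And>t. t \<in> {0..1} \<Longrightarrow> d' (d t) = d (d'' t)" for F d' d''
    using TD_TD_TU_intertwine[OF that(1) d u(1) _ that(2-6)] u(2) T_eq TD_in_M0[OF that(1,4,5)] that(1)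
    by simp
  show ?thesis
    unfolding comp_left_eq_comp_right_iff
  proof (intro conjI ballI)
    fix T1 assume "T1 \<in> Dcal'"
    then obtain d' where d': "T1 = TD d'" "d' \<in> hatFD" "right_cont_01 d'" by (auto simp: Dcal'_iff)
    define d'' where "d'' = (\<lambda>x. di (d' (d x)))"
    have d'': "d'' \<in> hatFD" "right_cont_01 d''" unfolding d''_def
      by (rule hatFD_comp[OF hdi(1) hatFD_comp[OF d'(2) hd(1)]],
          rule right_cont_01_comp[OF hdi hatFD_comp[OF d'(2) hd(1)] right_cont_01_comp[OF d'(2,3) hd]])
    have "d' (d t) = d (d'' t)" if "t \<in> {0..1}" for t
      unfolding d''_def using inv(3) hatFD_D(2)[OF d'(2)] homeo01_range[OF d that] by simp
    then have "\<forall>F\<in>M0. T1 (T F) = T (TD d'' F)" using swap d' d'' by simp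
    moreover have "TD d'' \<in> Dcal'" using d'' by (auto simp: Dcal'_iff)
    ultimately show "\<exists>T2\<in>Dcal'. \<forall>F\<in>M0. T1 (T F) = T (T2 F)" by blast
  next
    fix T2 assume "T2 \<in> Dcal'"
    then obtain d'' where d'': "T2 = TD d''" "d'' \<in> hatFD" "right_cont_01 d''" by (auto simp: Dcal'_iff)
    define d' where "d' = (\<lambda>x. d (d'' (di x)))"
    have d': "d' \<in> hatFD" "right_cont_01 d'" unfolding d'_def
      by (rule hatFD_comp[OF hd(1) hatFD_comp[OF d''(2) hdi(1)]],
          rule right_cont_01_comp[OF hd hatFD_comp[OF d''(2) hdi(1)] right_cont_01_comp[OF d''(2,3) hdi]])
    have "d' (d t) = d (d'' t)" if "t \<in> {0..1}" for t
      unfolding d'_def using inv(2) that by simp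
    then have "\<forall>F\<in>M0. TD d' (T F) = T (T2 F)" using swap d' d'' by simp
    moreover have "TD d' \<in> Dcal'" using d' by (auto simp: Dcal'_iff)
    ultimately show "\<exists>T1\<in>Dcal'. \<forall>F\<in>M0. T1 (T F) = T (T2 F)" by blast
  qed
qed

locale Dcal'_commuting = monotone_M0_map +
  assumes Dcal'_left: "d' \<in> hatFD \<Longrightarrow> right_cont_01 d' \<Longrightarrow>
      \<exists>d''. d'' \<in> hatFD \<and> right_cont_01 d'' \<and> (\<forall>F\<in>M0. TD d' (T F) = T (TD d'' F))"
    and Dcal'_right: "d'' \<in> hatFD \<Longrightarrow> right_cont_01 d'' \<Longrightarrow>
      \<exists>d'. d' \<in> hatFD \<and> right_cont_01 d' \<and> (\<forall>F\<in>M0. TD d' (T F) = T (TD d'' F))"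
begin

lemma threshold_half: "threshold (1/2) \<in> hatFD" "right_cont_01 (threshold (1/2))"
  by (simp_all add: threshold_in_hatFD right_cont_01_threshold)

text \<open>Distortions fix point masses, so \<open>T\<close> maps a point mass to a distribution that is
  fixed by the distortion \<open>threshold (1/2)\<close>, i.e.\ to a two-valued one.\<close>

lemma T_delta_eq_delta: "\<exists>y. T (delta x) = delta y"
proof -
  obtain d'' where d'': "d'' \<in> hatFD" "\<forall>F\<in>M0. TD (threshold (1/2)) (T F) = T (TD d'' F)"
    using Dcal'_left[OF threshold_half] by blast
  let ?P = "T (delta x)"
  have P: "?P \<in> M0" by (rule T_M0[OF delta_in_M0])
  have "TD (threshold (1/2)) ?P = ?P" using d''(2) delta_in_M0 TD_delta[OF d''(1)] by simp
  then have "?P = (\<lambda>y. threshold (1/2) (?P y))" using TD_eq_comp[OF P threshold_half] by simp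
  then have eq: "?P y = threshold (1/2) (?P y)" for y by (rule fun_cong)
  have "?P y = 0 \<or> ?P y = 1" for y using eq[of y] unfolding threshold_def by (auto split: if_splits)
  then show ?thesis by (rule M0_two_valued_eq_delta[OF P]) blast
qed

sublocale point_mass_map
  using monotone_M0_map_axioms T_delta_eq_delta
  by (simp add: point_mass_map_def point_mass_map_axioms_def)

definition threshold_conj :: "real \<Rightarrow> real \<Rightarrow> real" where
  "threshold_conj p = (SOME e. e \<in> hatFD \<and> right_cont_01 e \<and> (\<forall>F\<in>M0. TD e (T F) = T (TD (threshold p) F)))"

lemma threshold_conj:
  assumes "0 < p" "p < 1"
  shows "threshold_conj p \<in> hatFD" "right_cont_01 (threshold_conj p)" "\<And>F. F \<in> M0 \<Longrightarrow> TD (threshold_conj p) (T F) = T (TD (threshold p) F)"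
proof -
  have "\<exists>e. e \<in> hatFD \<and> right_cont_01 e \<and> (\<forall>F\<in>M0. TD e (T F) = T (TD (threshold p) F))"
    using Dcal'_right[OF threshold_in_hatFD[OF assms] right_cont_01_threshold] by blast
  then have "threshold_conj p \<in> hatFD \<and> right_cont_01 (threshold_conj p) \<and> (\<forall>F\<in>M0. TD (threshold_conj p) (T F) = T (TD (threshold p) F))"
    unfolding threshold_conj_def by (rule someI_ex)
  then show "threshold_conj p \<in> hatFD" "right_cont_01 (threshold_conj p)" "\<And>F. F \<in> M0 \<Longrightarrow> TD (threshold_conj p) (T F) = T (TD (threshold p) F)"
    by auto
qed

lemma threshold_conj_apply:
  assumes "0 < p" "p < 1" "F \<in> M0" shows "threshold_conj p (T F y) = T (TD (threshold p) F) y"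
proof -
  have "TD (threshold_conj p) (T F) = (\<lambda>y. threshold_conj p (T F y))" by (rule TD_eq_comp[OF T_M0[OF assms(3)] threshold_conj(1,2)[OF assms(1,2)]])
  then show ?thesis using fun_cong[OF threshold_conj(3)[OF assms], of y] by simp
qed

text \<open>If \<open>T F \<noteq> delta c\<close>, then some \<open>threshold r \<circ> T F \<noteq> delta c\<close>. It equals \<open>T F'\<close> for some
  \<open>F'\<close> and, being two-valued, is fixed by the conjugate of \<open>threshold (1/2)\<close>; so it is the
  image \<open>T (TD (threshold (1/2)) F')\<close> of a point mass, i.e.\ \<open>delta c\<close>.\<close>

lemma T_eq_delta_if_u_const:
  assumes u: "\<And>x. u x = c" and F: "F \<in> M0"
  shows "T F = delta c"
proof (rule ccontr)
  let ?H = "T F"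
  have H: "?H \<in> M0" by (rule T_M0[OF F])
  assume "?H \<noteq> delta c"
  then obtain y0 where y0: "?H y0 \<noteq> delta c y0" by auto
  define r where "r = (if c \<le> y0 then (?H y0 + 1) / 2 else ?H y0 / 2)"
  have r: "0 < r" "r < 1" "threshold r (?H y0) \<noteq> delta c y0"
    using y0 M0_nonneg[OF H, of y0] M0_le_1[OF H, of y0]
    by (auto simp: r_def threshold_def delta_def split: if_splits)
  obtain d'' where d'': "d'' \<in> hatFD" "right_cont_01 d''" "\<forall>G\<in>M0. TD (threshold r) (T G) = T (TD d'' G)"
    using Dcal'_left[OF threshold_in_hatFD[OF r(1,2)] right_cont_01_threshold] by blast
  let ?F' = "TD d'' F"
  have F': "?F' \<in> M0" by (rule TD_in_M0[OF F d''(1,2)])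
  have P: "T ?F' = (\<lambda>y. threshold r (?H y))"
    using d''(3) F TD_eq_comp[OF H threshold_in_hatFD[OF r(1,2)] right_cont_01_threshold] by simp
  obtain q where q: "TD (threshold (1/2)) ?F' = delta q" by (rule TD_threshold_eq_delta[OF F', of "1/2"]) auto
  have "T (TD (threshold (1/2)) ?F') = TD (threshold_conj (1/2)) (T ?F')" by (rule threshold_conj(3)[symmetric]) (simp_all add: F')
  also have "\<dots> = T ?F'"
    using T_M0[OF F'] threshold_conj(1)[of "1/2"] by (intro TD_two_valued) (simp_all add: P threshold_def)
  finally have "T ?F' = delta c" using q T_delta u by simp
  then have "delta c y0 = threshold r (?H y0)" using fun_cong[OF P, of y0] by simp
  with r(3) show False by simp
qed

end

locale Dcal'_commuting_nondegenerate = Dcal'_commuting +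
  fixes x0 x1 :: real
  assumes x01: "x0 < x1" and u01: "u x0 < u x1"
begin

definition two_point_at :: "real \<Rightarrow> real \<Rightarrow> real" where
  "two_point_at r = two_point r x0 (x1 - x0)"

lemma two_point_at_in_M0: "0 \<le> r \<Longrightarrow> r \<le> 1 \<Longrightarrow> two_point_at r \<in> M0"
  unfolding two_point_at_def using x01 by (simp add: two_point_in_M0)

lemma two_point_at_0: "two_point_at 0 = delta x1" and two_point_at_1: "two_point_at 1 = delta x0"
  using x01 by (auto simp: two_point_at_def two_point_def delta_def)

lemma TD_two_point_at:
  assumes "d \<in> hatFD" "right_cont_01 d" "0 \<le> r" "r \<le> 1"
  shows "TD d (two_point_at r) = two_point_at (d r)"
  unfolding TD_eq_comp[OF two_point_at_in_M0[OF assms(3,4)] assms(1,2)]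
  using hatFD_D(3,4)[OF assms(1)] by (auto simp: two_point_at_def two_point_def)

definition distortion :: "real \<Rightarrow> real" where
  "distortion r = T (two_point_at r) (u x0)"

lemma distortion_0: "distortion 0 = 0" and distortion_1: "distortion 1 = 1"
  using u01 by (simp_all add: distortion_def two_point_at_0 two_point_at_1 T_delta) (simp_all add: delta_def)

lemma distortion_range: "0 \<le> r \<Longrightarrow> r \<le> 1 \<Longrightarrow> distortion r \<in> {0..1}"
  unfolding distortion_def using T_M0[OF two_point_at_in_M0] M0_nonneg M0_le_1 by auto

lemma distortion_mono: "0 \<le> r \<Longrightarrow> r \<le> r' \<Longrightarrow> r' \<le> 1 \<Longrightarrow> distortion r \<le> distortion r'"
proof -
  assume r: "0 \<le> r" "r \<le> r'" "r' \<le> 1"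
  have "st_le (two_point_at r') (two_point_at r)" using r by (auto simp: st_le_def two_point_at_def two_point_def)
  then have "st_le (T (two_point_at r')) (T (two_point_at r))" using r by (intro T_st_le two_point_at_in_M0) auto
  then show "distortion r \<le> distortion r'" by (simp add: st_le_def distortion_def)
qed

lemma threshold_conj_distortion:
  assumes p: "0 < p" "p < 1" and r: "0 \<le> r" "r \<le> 1"
  shows "threshold_conj p (distortion r) = threshold p r"
proof -
  have "threshold_conj p (distortion r) = T (TD (threshold p) (two_point_at r)) (u x0)"
    unfolding distortion_def by (rule threshold_conj_apply[OF p two_point_at_in_M0[OF r]])
  also have "TD (threshold p) (two_point_at r) = two_point_at (threshold p r)"
    by (rule TD_two_point_at[OF threshold_in_hatFD[OF p] right_cont_01_threshold r])
  also have "T (two_point_at (threshold p r)) (u x0) = threshold p r"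
    using u01 by (cases "p \<le> r") (simp_all add: threshold_def two_point_at_0 two_point_at_1 T_delta, simp_all add: delta_def)
  finally show ?thesis .
qed

lemma strict_mono_on_distortion: "strict_mono_on {0..1} distortion"
proof (rule strict_mono_onI)
  fix r r' :: real assume r: "r \<in> {0..1}" "r' \<in> {0..1}" "r < r'"
  define p where "p = (r + r') / 2"
  have p: "0 < p" "p < 1" "r < p" "p \<le> r'" using r by (auto simp: p_def)
  have "threshold_conj p (distortion r) \<noteq> threshold_conj p (distortion r')" using threshold_conj_distortion[OF p(1,2)] r p by (simp add: threshold_def)
  then have "distortion r \<noteq> distortion r'" by auto
  moreover have "distortion r \<le> distortion r'" using distortion_mono[of r r'] r by simp
  ultimately show "distortion r < distortion r'" by simp
qed

text \<open>Every level \<open>m\<close> is reached: conjugating a homeomorphism sending \<open>distortion (1/2)\<close> to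
  \<open>m\<close> through \<open>T\<close> turns \<open>two_point_at (1/2)\<close> into some \<open>two_point_at r\<close> with \<open>distortion r = m\<close>.\<close>

lemma distortion_onto: "distortion ` {0..1} = {0..1}"
proof (intro equalityI subsetI)
  fix m :: real assume m: "m \<in> {0..1}"
  show "m \<in> distortion ` {0..1}"
  proof (cases "m = 0 \<or> m = 1")
    case True then show ?thesis using distortion_0 distortion_1 by force
  next
    case False
    then have m01: "0 < m" "m < 1" using m by auto
    define v where "v = distortion (1/2)"
    have v: "0 < v" "v < 1"
      using strict_mono_onD[OF strict_mono_on_distortion, of 0 "1/2"]
        strict_mono_onD[OF strict_mono_on_distortion, of "1/2" 1] distortion_0 distortion_1
      by (simp_all add: v_def)
    note kink = homeo01_kink[OF m01 v]
    obtain d'' where d'': "d'' \<in> hatFD" "right_cont_01 d''" "\<forall>F\<in>M0. TD (kink m v) (T F) = T (TD d'' F)"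
      using Dcal'_left[OF homeo01_in_hatFD[OF kink(1)] homeo01_right_cont_01[OF kink(1)]] by blast
    have half: "two_point_at (1/2) \<in> M0" by (rule two_point_at_in_M0) simp_all
    have "TD (kink m v) (T (two_point_at (1/2))) (u x0) = kink m v v"
      using TD_eq_comp[OF T_M0[OF half] homeo01_in_hatFD[OF kink(1)] homeo01_right_cont_01[OF kink(1)]]
      by (simp add: v_def distortion_def)
    also have "TD (kink m v) (T (two_point_at (1/2))) = T (two_point_at (d'' (1/2)))"
      using d''(3) half TD_two_point_at[OF d''(1,2), of "1/2"] by simp
    finally have "m = distortion (d'' (1/2))" using kink(2) by (simp add: distortion_def)
    moreover have "d'' (1/2) \<in> {0..1}" by (rule hatFD_D(2)[OF d''(1)]) simp
    ultimately show ?thesis by blast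
  qed
qed (use distortion_range in auto)

lemma homeo01_distortion: "homeo01 distortion"
  by (rule homeo01_if_strict_mono_on_onto[OF strict_mono_on_distortion distortion_onto])

lemma threshold_conj_eq_threshold:
  assumes p: "0 < p" "p < 1" and t: "t \<in> {0..1}"
  shows "threshold_conj p t = threshold (distortion p) t"
proof -
  obtain r where r: "t = distortion r" "r \<in> {0..1}" using t distortion_onto by (metis imageE)
  then show ?thesis
    using threshold_conj_distortion[OF p, of r] strict_mono_on_less_eq[OF strict_mono_on_distortion, of p r] p
    by (simp add: threshold_def)
qed

text \<open>Left continuity of \<open>u\<close>: if \<open>u \<le> y\<close> left of \<open>z\<close>, push the uniform distribution on
  \<open>[z - 1, z + 1]\<close> through \<open>T\<close> and compare its thresholds below and at the median.\<close>

lemma u_le_if_below: assumes below: "\<And>x. x < z \<Longrightarrow> u x \<le> y" shows "u z \<le> y"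
proof -
  let ?G = "T (uniform_cdf z)"
  have G: "?G \<in> M0" by (rule T_M0[OF uniform_cdf_in_M0])
  have Gy: "?G y \<in> {0..1}" using M0_nonneg[OF G] M0_le_1[OF G] by auto
  have key: "threshold_conj p (?G y) = delta (u (z - 1 + 2 * p)) y" if "0 < p" "p < 1" for p
    using threshold_conj_apply[OF that uniform_cdf_in_M0] TD_threshold_uniform_cdf[OF that] T_delta by simp
  have "distortion p \<le> ?G y" if "0 < p" "p < 1/2" for p
  proof -
    have "threshold_conj p (?G y) = 1" using key[of p] below[of "z - 1 + 2 * p"] that by (simp add: delta_def)
    then show ?thesis using threshold_conj_eq_threshold[of p "?G y"] that Gy by (simp add: threshold_def split: if_splits)
  qed
  moreover have "(distortion \<longlongrightarrow> distortion (1/2)) (at_left (1/2))"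
    by (rule homeo01_tendsto_at_left[OF homeo01_distortion]) simp
  ultimately have "distortion (1/2) \<le> ?G y"
    by (intro tendsto_upperbound[of distortion "distortion (1/2)" "at_left (1/2)" "?G y"])
      (auto simp: eventually_at_left_field intro!: exI[of _ 0])
  then have "threshold_conj (1/2) (?G y) = 1" using threshold_conj_eq_threshold[of "1/2" "?G y"] Gy by (simp add: threshold_def)
  then have "delta (u z) y = 1" using key[of "1/2"] by simp
  then show ?thesis by (simp add: delta_def split: if_splits)
qed

lemma continuous_at_left_u: "continuous (at_left z) u"
proof -
  have "\<exists>\<delta>>0. u z - u (z - \<delta>) < \<epsilon>" if "\<epsilon> > 0" for \<epsilon>
  proof (rule ccontr)
    assume "\<not> (\<exists>\<delta>>0. u z - u (z - \<delta>) < \<epsilon>)"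
    then have "u x \<le> u z - \<epsilon>" if "x < z" for x using that by (auto dest!: spec[of _ "z - x"])
    then have "u z \<le> u z - \<epsilon>" by (rule u_le_if_below)
    then show False using \<open>\<epsilon> > 0\<close> by simp
  qed
  then show ?thesis using continuous_at_left_real_increasing[of u z] monoD[OF mono_u] by blast
qed

theorem T_eq_TD_TU: assumes F: "F \<in> M0" shows "T F = TD distortion (TU u F)"
proof -
  have UF: "TU u F \<in> M0" by (rule TU_in_M0[OF F borel_measurable_mono[OF mono_u]])
  have "T F y = distortion (TU u F y)" for y
  proof (rule homeo01_eq_if_le_iff[OF homeo01_distortion])
    show "TU u F y \<in> {0..1}" "T F y \<in> {0..1}"
      using M0_nonneg M0_le_1 UF T_M0[OF F] by auto
    fix p :: real assume p: "0 < p" "p < 1"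
    note thr = threshold_in_hatFD[OF p] right_cont_01_threshold
    obtain q where q: "TD (threshold p) F = delta q" by (rule TD_threshold_eq_delta[OF F p])
    have "threshold_conj p (T F y) = delta (u q) y" using threshold_conj_apply[OF p F] q T_delta by simp
    moreover have "TD (threshold p) (TU u F) = delta (u q)"
      using TU_TD_commute_right_cont[OF F thr mono_u continuous_at_left_u] q
        TU_delta[OF borel_measurable_mono[OF mono_u]] by simp
    then have "threshold p (TU u F y) = delta (u q) y"
      using fun_cong[OF TD_eq_comp[OF UF thr], of y] by simp
    ultimately show "distortion p \<le> T F y \<longleftrightarrow> p \<le> TU u F y"
      using threshold_conj_eq_threshold[OF p, of "T F y"] M0_nonneg M0_le_1 T_M0[OF F]
      by (simp add: threshold_def split: if_splits)
  qed
  then show ?thesis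
    using TD_eq_comp[OF UF homeo01_in_hatFD[OF homeo01_distortion] homeo01_right_cont_01[OF homeo01_distortion]]
    by auto
qed

end

lemma TD_TU_if_commutes_Ucal:
  assumes T: "\<forall>F\<in>M0. T F \<in> M0" "monotone_map T" and comm: "comp_left Ucal T = comp_right T Ucal"
  shows "\<exists>d u. d \<in> hatFD \<and> strict_mono u \<and> surj u \<and> (\<forall>F\<in>M0. T F = TD d (TU u F))"
proof -
  have L: "\<forall>T1\<in>Ucal. \<exists>T2\<in>Ucal. \<forall>F\<in>M0. T1 (T F) = T (T2 F)"
    and R: "\<forall>T2\<in>Ucal. \<exists>T1\<in>Ucal. \<forall>F\<in>M0. T1 (T F) = T (T2 F)"
    using comm unfolding comp_left_eq_comp_right_iff by blast+
  interpret Ucal_commuting T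
  proof unfold_locales
    show "F \<in> M0 \<Longrightarrow> T F \<in> M0" for F using T(1) by blast
    show "monotone_map T" by (rule T(2))
  next
    fix v :: "real \<Rightarrow> real" assume "mono v" "continuous_on UNIV v"
    then have "TU v \<in> Ucal" by (auto simp: Ucal_def)
    then obtain T2 where "T2 \<in> Ucal" "\<forall>F\<in>M0. TU v (T F) = T (T2 F)" using L by blast
    then show "\<exists>w. mono w \<and> continuous_on UNIV w \<and> (\<forall>F\<in>M0. TU v (T F) = T (TU w F))"
      by (auto simp: Ucal_def)
  next
    fix w :: "real \<Rightarrow> real" assume "mono w" "continuous_on UNIV w"
    then have "TU w \<in> Ucal" by (auto simp: Ucal_def)
    then obtain T1 where "T1 \<in> Ucal" "\<forall>F\<in>M0. T1 (T F) = T (TU w F)" using R by blast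
    then show "\<exists>v. mono v \<and> continuous_on UNIV v \<and> (\<forall>F\<in>M0. TU v (T F) = T (TU w F))"
      by (auto simp: Ucal_def)
  qed
  show ?thesis using S.distortion_in_hatFD strict_mono_u surj_u T_eq_TD_TU by blast
qed

lemma TD_TU_if_commutes_Dcal':
  assumes T: "\<forall>F\<in>M0. T F \<in> M0" "monotone_map T" and comm: "comp_left Dcal' T = comp_right T Dcal'"
  shows "\<exists>d u. mono u \<and> (\<forall>x. continuous (at_left x) u) \<and> homeo01 d \<and> (\<forall>F\<in>M0. T F = TD d (TU u F))"
proof -
  have L: "\<forall>T1\<in>Dcal'. \<exists>T2\<in>Dcal'. \<forall>F\<in>M0. T1 (T F) = T (T2 F)"
    and R: "\<forall>T2\<in>Dcal'. \<exists>T1\<in>Dcal'. \<forall>F\<in>M0. T1 (T F) = T (T2 F)"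
    using comm unfolding comp_left_eq_comp_right_iff by blast+
  interpret Dcal'_commuting T
  proof unfold_locales
    show "F \<in> M0 \<Longrightarrow> T F \<in> M0" for F using T(1) by blast
    show "monotone_map T" by (rule T(2))
  next
    fix d' :: "real \<Rightarrow> real" assume "d' \<in> hatFD" "right_cont_01 d'"
    then have "TD d' \<in> Dcal'" by (auto simp: Dcal'_iff)
    then obtain T2 where "T2 \<in> Dcal'" "\<forall>F\<in>M0. TD d' (T F) = T (T2 F)" using L by blast
    then show "\<exists>d''. d'' \<in> hatFD \<and> right_cont_01 d'' \<and> (\<forall>F\<in>M0. TD d' (T F) = T (TD d'' F))"
      by (auto simp: Dcal'_iff)
  next
    fix d'' :: "real \<Rightarrow> real" assume "d'' \<in> hatFD" "right_cont_01 d''"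
    then have "TD d'' \<in> Dcal'" by (auto simp: Dcal'_iff)
    then obtain T1 where "T1 \<in> Dcal'" "\<forall>F\<in>M0. T1 (T F) = T (TD d'' F)" using R by blast
    then show "\<exists>d'. d' \<in> hatFD \<and> right_cont_01 d' \<and> (\<forall>F\<in>M0. TD d' (T F) = T (TD d'' F))"
      by (auto simp: Dcal'_iff)
  qed
  show ?thesis
  proof (cases "\<forall>x. u x = u 0")
    case True
    have "T F = TD (\<lambda>t. t) (TU (\<lambda>_. u 0) F)" if "F \<in> M0" for F
      using T_eq_delta_if_u_const[of "u 0" F] True that
      by (simp add: TU_const TD_delta homeo01_in_hatFD[OF homeo01_ident])
    then show ?thesis using homeo01_ident by (intro exI[of _ "\<lambda>t. t"] exI[of _ "\<lambda>_. u 0"]) (simp add: mono_def)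
  next
    case False
    then obtain x where "u x \<noteq> u 0" by blast
    obtain a b where ab: "a < b" "u a < u b"
    proof (cases "x < 0")
      case True
      then show ?thesis using that[of x 0] \<open>u x \<noteq> u 0\<close> monoD[OF mono_u, of x 0] by simp
    next
      case False
      then have "0 < x" using \<open>u x \<noteq> u 0\<close> by (cases "x = 0") auto
      then show ?thesis using that[of 0 x] \<open>u x \<noteq> u 0\<close> monoD[OF mono_u, of 0 x] by simp
    qed
    interpret Dcal'_commuting_nondegenerate T a b
      using monotone_M0_map_axioms Dcal'_commuting_axioms ab
      by (simp add: Dcal'_commuting_nondegenerate_def Dcal'_commuting_def
          Dcal'_commuting_nondegenerate_axioms_def)
    show ?thesis using mono_u continuous_at_left_u homeo01_distortion T_eq_TD_TU by blast
  qed
qed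

theorem proposition6:
  fixes T :: "(real \<Rightarrow> real) \<Rightarrow> (real \<Rightarrow> real)"
  assumes "\<forall>F\<in>M0. T F \<in> M0"
    and "monotone_map T"
  shows "(comp_left Ucal T = comp_right T Ucal \<longleftrightarrow>
           (\<exists>d u. d \<in> hatFD \<and> strict_mono u \<and> surj u
              \<and> (\<forall>F\<in>M0. T F = TD d (TU u F))))
       \<and> (comp_left Dcal' T = comp_right T Dcal' \<longleftrightarrow>
           (\<exists>d u. mono u \<and> (\<forall>x. continuous (at_left x) u)
              \<and> d \<in> hatFD \<and> strict_mono_on {0..1} d \<and> continuous_on {0..1} d
              \<and> (\<forall>F\<in>M0. T F = TD d (TU u F))))"
proof -
  have homeo01_iff: "homeo01 d \<longleftrightarrow> d \<in> hatFD \<and> strict_mono_on {0..1} d \<and> continuous_on {0..1} d"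
    for d :: "real \<Rightarrow> real"
    using homeo01_in_hatFD by (auto simp: homeo01_def hatFD_def)
  show ?thesis
    apply (intro conjI iffI)
    subgoal by (rule TD_TU_if_commutes_Ucal[OF assms])
    subgoal using commutes_Ucal_if_TD_TU[OF assms(1)] by blast
    subgoal using TD_TU_if_commutes_Dcal'[OF assms] homeo01_iff by blast
    subgoal using commutes_Dcal'_if_TD_TU[OF assms(1)] homeo01_iff by blast
    done
qed

end
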